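(* Let $A$ be a unital $C^*$-algebra such that for every nonzero projection $e\in A$ the hereditary $C^*$-subalgebra $eAe$ is infinite dimensional. Let $b\in A^+$ with $\|b\|=1$ and let $\epsilon>0$. Then for every integer $n\ge1$ there exist $b_1,\dots,b_n\in A^+$ with $\|b_j\|=1$, $bb_j=b_jb$, $\|bb_j\|\ge 1-\epsilon$ for all $j$, and $b_ib_j=0$ for $i\ne j$. *)

theory Defs
  imports "HOL-Analysis.Analysis"
begin

text \<open>A unital C*-algebra: a unital real Banach algebra (norm of the unit is 1)
  equipped with a complex scalar multiplication extending the real one,
  compatible with norm and multiplication, and an involution satisfying the
  C*-identity.\<close>

locale unital_cstar_algebra =
  fixes scaleC :: "complex \<Rightarrow> 'a::{real_normed_algebra_1, banach} \<Rightarrow> 'a"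
    and star :: "'a \<Rightarrow> 'a"
  assumes scaleC_of_real: "\<And>r x. scaleC (complex_of_real r) x = r *\<^sub>R x"
    and scaleC_add_left: "\<And>a b x. scaleC (a + b) x = scaleC a x + scaleC b x"
    and scaleC_add_right: "\<And>a x y. scaleC a (x + y) = scaleC a x + scaleC a y"
    and scaleC_scaleC: "\<And>a b x. scaleC a (scaleC b x) = scaleC (a * b) x"
    and norm_scaleC: "\<And>a x. norm (scaleC a x) = cmod a * norm x"
    and scaleC_mult_left: "\<And>a x y. scaleC a (x * y) = scaleC a x * y"
    and scaleC_mult_right: "\<And>a x y. scaleC a (x * y) = x * scaleC a y"
    and star_star: "\<And>x. star (star x) = x"
    and star_add: "\<And>x y. star (x + y) = star x + star y"
    and star_scaleC: "\<And>a x. star (scaleC a x) = scaleC (cnj a) (star x)"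
    and star_mult: "\<And>x y. star (x * y) = star y * star x"
    and cstar_identity: "\<And>x. norm (star x * x) = norm x ^ 2"

definition invertible_elem :: "'a::ring_1 \<Rightarrow> bool" where
  "invertible_elem a \<longleftrightarrow> (\<exists>y. a * y = 1 \<and> y * a = 1)"

definition cspectrum :: "(complex \<Rightarrow> 'a::ring_1 \<Rightarrow> 'a) \<Rightarrow> 'a \<Rightarrow> complex set" where
  "cspectrum scaleC a = {l. \<not> invertible_elem (a - scaleC l 1)}"

definition positive_elem :: "(complex \<Rightarrow> 'a::ring_1 \<Rightarrow> 'a) \<Rightarrow> ('a \<Rightarrow> 'a) \<Rightarrow> 'a \<Rightarrow> bool" where
  "positive_elem scaleC star a \<longleftrightarrow>
     star a = a \<and> (\<forall>l\<in>cspectrum scaleC a. Im l = 0 \<and> Re l \<ge> 0)"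

definition projection_elem :: "('a::ring_1 \<Rightarrow> 'a) \<Rightarrow> 'a \<Rightarrow> bool" where
  "projection_elem star e \<longleftrightarrow> star e = e \<and> e * e = e"

definition corner :: "'a::ring_1 \<Rightarrow> 'a set" where
  "corner e = {e * x * e | x. True}"

definition cspan_fin :: "(complex \<Rightarrow> 'a::ring_1 \<Rightarrow> 'a) \<Rightarrow> 'a set \<Rightarrow> 'a set" where
  "cspan_fin scaleC S = {\<Sum>s\<in>S. scaleC (c s) s | c. True}"

definition cinfinite_dim :: "(complex \<Rightarrow> 'a::ring_1 \<Rightarrow> 'a) \<Rightarrow> 'a set \<Rightarrow> bool" where
  "cinfinite_dim scaleC V \<longleftrightarrow> \<not> (\<exists>S. finite S \<and> S \<subseteq> V \<and> V \<subseteq> cspan_fin scaleC S)"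

end

theory Submission
  imports Defs "HOL-Computational_Algebra.Fundamental_Theorem_Algebra"
begin

(* The norm of a self-adjoint element h is bounded by its spectral radius: averaging the
   resolvent (1 - \<mu>x)\<^sup>-\<^sup>1 over the N-th roots of unity inverts 1 - \<mu>\<^sup>N x\<^sup>N, and uniform
   continuity of the resolvent on the closed unit disc lets smallness of t\<^sup>N x\<^sup>N propagate from
   t = 0 to t = 1. With spectral mapping for polynomials (fundamental theorem of algebra), P(h) has norm
   at most sup |P| on the spectrum, so Weierstrass approximation yields a continuous functional
   calculus f(h).

   Let a = max (1/2) (1 - \<epsilon>). If the spectrum of b has n points above a, disjoint tents f\<^sub>j
   around them give orthogonal positive b\<^sub>j = f\<^sub>j(b) commuting with b, and \<parallel>b b\<^sub>j\<parallel> \<ge> a \<parallel>b\<^sub>j\<parallel>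
   because b\<^sub>j = g(b) b b\<^sub>j for g(x) = 1 / max x a. Otherwise 1 is an isolated point of the
   spectrum, and its spectral projection p satisfies b p = p. In the infinite dimensional corner
   pAp either some self-adjoint element has infinite spectrum, and tents work as before, or all
   spectra are finite; then a maximal orthogonal family of projections in pAp consists of minimal
   projections q, with qAq = \<complex>q, and sums to p, which makes pAp = \<Sum> qAq' finite dimensional. *)

section \<open>Invertible elements of a Banach algebra\<close>

definition inverse_elem :: "'a::ring_1 \<Rightarrow> 'a" where
  "inverse_elem a = (SOME y. a * y = 1 \<and> y * a = 1)"

lemma invertible_elemI: "(a::'a::ring_1) * y = 1 \<Longrightarrow> y * a = 1 \<Longrightarrow> invertible_elem a"
  unfolding invertible_elem_def by blast

lemma invertible_elem_one [simp]: "invertible_elem (1::'a::ring_1)"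
  by (rule invertible_elemI[of _ 1]) simp_all

lemma inverse_elem:
  assumes "invertible_elem a"
  shows inverse_elem_right: "a * inverse_elem a = 1" and inverse_elem_left: "inverse_elem a * a = 1"
proof -
  have "\<exists>y. a * y = 1 \<and> y * a = 1" using assms unfolding invertible_elem_def by blast
  then have "a * inverse_elem a = 1 \<and> inverse_elem a * a = 1" unfolding inverse_elem_def by (rule someI_ex)
  then show "a * inverse_elem a = 1" "inverse_elem a * a = 1" by auto
qed

lemma inverse_elem_eqI:
  fixes a y :: "'a::ring_1"
  assumes "a * y = 1" "y * a = 1"
  shows "inverse_elem a = y"
proof -
  have inv: "invertible_elem a" using assms by (rule invertible_elemI)
  have "inverse_elem a = (inverse_elem a * a) * y" using assms by (simp add: mult.assoc)
  then show ?thesis using inverse_elem_left[OF inv] by simp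
qed

lemma invertible_elem_mult:
  fixes a b :: "'a::ring_1"
  assumes "invertible_elem a" "invertible_elem b"
  shows "invertible_elem (a * b)"
proof (rule invertible_elemI[of _ "inverse_elem b * inverse_elem a"])
  have "a * b * (inverse_elem b * inverse_elem a) = a * (b * inverse_elem b) * inverse_elem a"
    by (simp add: mult.assoc)
  then show "a * b * (inverse_elem b * inverse_elem a) = 1"
    using assms by (simp add: inverse_elem_right)
  have "inverse_elem b * inverse_elem a * (a * b) = inverse_elem b * (inverse_elem a * a) * b"
    by (simp add: mult.assoc)
  then show "inverse_elem b * inverse_elem a * (a * b) = 1"
    using assms by (simp add: inverse_elem_left)
qed

lemma invertible_one_minus:
  fixes z :: "'a::{real_normed_algebra_1, banach}"
  assumes "norm z < 1"
  shows "invertible_elem (1 - z)" "norm (inverse_elem (1 - z)) \<le> 1 / (1 - norm z)"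
proof -
  have nsum: "summable (\<lambda>n. norm z ^ n)" using assms by (simp add: summable_geometric)
  have bnd: "norm (z ^ n) \<le> norm z ^ n" for n by (rule norm_power_ineq)
  have ns: "summable (\<lambda>n. norm (z ^ n))"
    by (rule summable_comparison_test[OF _ nsum]) (auto intro: bnd)
  then have sm: "summable (\<lambda>n. z ^ n)" by (rule summable_norm_cancel)
  define s where "s = (\<Sum>n. z ^ n)"
  have shift: "(\<Sum>n. z ^ Suc n) = s - 1"
    using suminf_split_head[OF sm] unfolding s_def by simp
  have "z * s = s - 1"
    using suminf_mult[OF sm, of z] shift unfolding s_def by (simp add: power_Suc)
  then have left: "(1 - z) * s = 1" by (simp add: algebra_simps)
  have "s * z = (\<Sum>n. z ^ Suc n)"
    using suminf_mult2[OF sm, of z] unfolding s_def by (simp only: power_Suc2)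
  then have right: "s * (1 - z) = 1" using shift by (simp add: algebra_simps)
  show "invertible_elem (1 - z)" using left right by (rule invertible_elemI)
  have "norm s \<le> (\<Sum>n. norm (z ^ n))" unfolding s_def by (rule summable_norm[OF ns])
  also have "\<dots> \<le> (\<Sum>n. norm z ^ n)" by (rule suminf_le[OF bnd ns nsum])
  also have "\<dots> = 1 / (1 - norm z)" using assms by (simp add: suminf_geometric)
  finally show "norm (inverse_elem (1 - z)) \<le> 1 / (1 - norm z)"
    using inverse_elem_eqI[OF left right] by simp
qed

lemma invertible_elem_add_small:
  fixes a d :: "'a::{real_normed_algebra_1, banach}"
  assumes inv: "invertible_elem a" and small: "norm (inverse_elem a) * norm d < 1"
  shows "invertible_elem (a + d)"
    "norm (inverse_elem (a + d) - inverse_elem a)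
       \<le> norm (inverse_elem a) ^ 2 * norm d / (1 - norm (inverse_elem a) * norm d)"
proof -
  define u where "u = inverse_elem a"
  define z where "z = - (u * d)"
  have nz: "norm z \<le> norm u * norm d" unfolding z_def by (simp add: norm_mult_ineq)
  then have nz1: "norm z < 1" using small unfolding u_def by linarith
  define w where "w = inverse_elem (1 - z)"
  have w: "(1 - z) * w = 1" "w * (1 - z) = 1"
    using invertible_one_minus(1)[OF nz1] unfolding w_def by (simp_all add: inverse_elem)
  have nw: "norm w \<le> 1 / (1 - norm z)" using invertible_one_minus(2)[OF nz1] unfolding w_def .
  have au: "a * u = 1" "u * a = 1" using inv unfolding u_def by (simp_all add: inverse_elem)
  have ad: "a + d = a * (1 - z)"
    unfolding z_def by (simp add: algebra_simps flip: mult.assoc) (simp add: au)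
  have ud: "u * (a + d) = 1 - z"
    unfolding z_def by (simp add: algebra_simps flip: mult.assoc) (simp add: au)
  have e1: "(a + d) * (w * u) = 1"
  proof -
    have "(a + d) * (w * u) = a * ((1 - z) * w) * u" unfolding ad by (simp add: mult.assoc)
    then show ?thesis using w au by simp
  qed
  have e2: "(w * u) * (a + d) = 1"
    using ud w by (simp add: mult.assoc)
  show "invertible_elem (a + d)" using e1 e2 by (rule invertible_elemI)
  have "inverse_elem (a + d) - inverse_elem a = (w * z) * u"
  proof -
    have wz: "w * z = w - 1" using w(2) by (simp add: algebra_simps)
    show ?thesis unfolding inverse_elem_eqI[OF e1 e2] u_def[symmetric] by (simp add: wz algebra_simps)
  qed
  then have "norm (inverse_elem (a + d) - inverse_elem a) \<le> norm w * norm z * norm u"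
    by (metis norm_mult_ineq mult_right_mono norm_ge_zero order_trans)
  also have "\<dots> \<le> (1 / (1 - norm z)) * (norm u * norm d) * norm u"
    using nz1 by (intro mult_mono nw nz) auto
  also have "\<dots> \<le> (1 / (1 - norm u * norm d)) * (norm u * norm d) * norm u"
  proof -
    have "1 / (1 - norm z) \<le> 1 / (1 - norm u * norm d)"
      using nz nz1 small unfolding u_def by (intro divide_left_mono) auto
    then show ?thesis by (intro mult_right_mono) auto
  qed
  also have "\<dots> = norm (inverse_elem a) ^ 2 * norm d / (1 - norm (inverse_elem a) * norm d)"
    unfolding u_def by (simp add: power2_eq_square)
  finally show "norm (inverse_elem (a + d) - inverse_elem a)
       \<le> norm (inverse_elem a) ^ 2 * norm d / (1 - norm (inverse_elem a) * norm d)" .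
qed

lemma tendsto_inverse_elem:
  fixes g :: "'b \<Rightarrow> 'a::{real_normed_algebra_1, banach}"
  assumes lim: "(g \<longlongrightarrow> a) F" and inv: "invertible_elem a"
  shows "((\<lambda>y. inverse_elem (g y)) \<longlongrightarrow> inverse_elem a) F"
proof -
  define u where "u = inverse_elem a"
  have "u \<noteq> 0" using inverse_elem_right[OF inv] unfolding u_def by auto
  then have u0: "norm u > 0" by simp
  have ev: "eventually (\<lambda>y. norm (g y - a) < 1 / (2 * norm u)) F"
    using lim u0 unfolding tendsto_iff dist_norm by auto
  have "((\<lambda>y. inverse_elem (g y) - inverse_elem a) \<longlongrightarrow> 0) F"
  proof (rule Lim_null_comparison)
    show "eventually (\<lambda>y. norm (inverse_elem (g y) - inverse_elem a) \<le> 2 * norm u ^ 2 * norm (g y - a)) F"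
      using ev
    proof eventually_elim
      case (elim y)
      define d where "d = g y - a"
      have s: "norm u * norm d < 1 / 2" using elim u0 unfolding d_def by (simp add: field_simps)
      have "norm (inverse_elem (a + d) - inverse_elem a) \<le> norm u ^ 2 * norm d / (1 - norm u * norm d)"
        using invertible_elem_add_small(2)[OF inv] s unfolding u_def by simp
      also have "\<dots> \<le> norm u ^ 2 * norm d / (1 / 2)"
        using s by (intro divide_left_mono) auto
      finally show ?case unfolding d_def by simp
    qed
    have "((\<lambda>y. norm (g y - a)) \<longlongrightarrow> 0) F" using lim
      by (simp add: tendsto_norm_zero_iff Lim_null[symmetric])
    then show "((\<lambda>y. 2 * norm u ^ 2 * norm (g y - a)) \<longlongrightarrow> 0) F"
      by (simp add: tendsto_mult_right_zero)
  qed
  then show ?thesis unfolding u_def by (simp add: Lim_null[symmetric])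
qed

section \<open>Scalars, involution and spectrum\<close>

context unital_cstar_algebra
begin

lemma scaleC_one [simp]: "scaleC 1 x = x"
  using scaleC_of_real[of 1 x] by simp

lemma scaleC_zero_left [simp]: "scaleC 0 x = 0"
  using scaleC_of_real[of 0 x] by simp

lemma scaleC_zero_right [simp]: "scaleC a 0 = 0"
  using scaleC_add_right[of a 0 0] by simp

lemma scaleC_minus_left: "scaleC (- a) x = - scaleC a x"
  using scaleC_add_left[of "-a" a x] by (simp add: eq_neg_iff_add_eq_0)

lemma scaleC_minus_right: "scaleC a (- x) = - scaleC a x"
  using scaleC_add_right[of a "-x" x] by (simp add: eq_neg_iff_add_eq_0)

lemma scaleC_diff_left: "scaleC (a - b) x = scaleC a x - scaleC b x"
  using scaleC_add_left[of a "-b" x] by (simp add: scaleC_minus_left)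

lemma scaleC_diff_right: "scaleC a (x - y) = scaleC a x - scaleC a y"
  using scaleC_add_right[of a x "-y"] by (simp add: scaleC_minus_right)

lemma scaleC_mult_both: "scaleC a x * scaleC b y = scaleC (a * b) (x * y)"
  by (simp add: scaleC_mult_left[symmetric] scaleC_mult_right[symmetric] scaleC_scaleC mult.commute)

lemma scaleC_one_mult: "scaleC a 1 * x = scaleC a x"
  by (metis mult_1 scaleC_mult_left)

lemma mult_scaleC_one: "x * scaleC a 1 = scaleC a x"
  by (metis mult_1_right scaleC_mult_right)

lemma scaleC_power: "(scaleC a x) ^ n = scaleC (a ^ n) (x ^ n)"
  by (induction n) (simp_all add: scaleC_mult_both)

lemma scaleC_sum_right: "scaleC a (sum f S) = (\<Sum>i\<in>S. scaleC a (f i))"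
  by (induction S rule: infinite_finite_induct) (simp_all add: scaleC_add_right)

lemma scaleC_sum_left: "scaleC (sum f S) x = (\<Sum>i\<in>S. scaleC (f i) x)"
  by (induction S rule: infinite_finite_induct) (simp_all add: scaleC_add_left)

lemma star_zero [simp]: "star 0 = 0"
  using star_add[of 0 0] by simp

lemma star_minus: "star (- x) = - star x"
  using star_add[of "-x" x] by (simp add: eq_neg_iff_add_eq_0)

lemma star_diff: "star (x - y) = star x - star y"
  using star_add[of x "-y"] by (simp add: star_minus)

lemma star_one [simp]: "star 1 = 1"
  using star_mult[of "star 1" 1] by (simp add: star_star)

lemma star_scaleR: "star (scaleC (complex_of_real r) x) = scaleC (complex_of_real r) (star x)"
  by (simp add: star_scaleC)

lemma star_sum: "star (sum f S) = (\<Sum>i\<in>S. star (f i))"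
  by (induction S rule: infinite_finite_induct) (simp_all add: star_add)

lemma star_power: "star (x ^ n) = star x ^ n"
  by (induction n) (simp_all add: star_mult power_commutes)

lemma norm_star [simp]: "norm (star x) = norm x"
proof -
  have le: "norm y \<le> norm (star y)" for y
  proof (cases "y = 0")
    case False
    have "norm y * norm y = norm (star y * y)" by (simp add: cstar_identity power2_eq_square)
    also have "\<dots> \<le> norm (star y) * norm y" by (rule norm_mult_ineq)
    finally show ?thesis using False by simp
  qed simp
  show ?thesis using le[of x] le[of "star x"] by (simp add: star_star)
qed

lemma norm_square_self_adjoint: "star x = x \<Longrightarrow> norm (x * x) = norm x ^ 2"
  using cstar_identity[of x] by simp

lemma norm_power_two_power_self_adjoint:
  assumes "star x = x"
  shows "norm (x ^ (2 ^ k)) = norm x ^ (2 ^ k)"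
proof (induction k)
  case (Suc k)
  have "x ^ (2 ^ Suc k) = x ^ (2 ^ k) * x ^ (2 ^ k)"
    by (simp add: power_add[symmetric] mult_2)
  then have "norm (x ^ (2 ^ Suc k)) = norm (x ^ (2 ^ k)) ^ 2"
    using norm_square_self_adjoint[of "x ^ 2 ^ k"] assms by (simp add: star_power)
  also have "\<dots> = norm x ^ (2 ^ Suc k)" using Suc by (simp add: power_mult[symmetric] mult.commute)
  finally show ?case .
qed simp

lemma invertible_scaleC:
  assumes "c \<noteq> 0" "invertible_elem y"
  shows "invertible_elem (scaleC c y)"
proof (rule invertible_elemI[of _ "scaleC (inverse c) (inverse_elem y)"])
  show "scaleC c y * scaleC (inverse c) (inverse_elem y) = 1"
    using assms by (simp add: scaleC_mult_both inverse_elem)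
  show "scaleC (inverse c) (inverse_elem y) * scaleC c y = 1"
    using assms by (simp add: scaleC_mult_both inverse_elem)
qed

lemma invertible_scaleC_iff:
  assumes "c \<noteq> 0"
  shows "invertible_elem (scaleC c y) \<longleftrightarrow> invertible_elem y"
  using assms invertible_scaleC[of "inverse c" "scaleC c y"] invertible_scaleC[of c y]
  by (auto simp: scaleC_scaleC)

abbreviation spectrum :: "'a \<Rightarrow> complex set" where
  "spectrum a \<equiv> cspectrum scaleC a"

lemma mem_spectrum_iff: "l \<in> spectrum a \<longleftrightarrow> \<not> invertible_elem (a - scaleC l 1)"
  unfolding cspectrum_def by simp

lemma norm_le_if_mem_spectrum:
  assumes "l \<in> spectrum a"
  shows "cmod l \<le> norm a"
proof (rule ccontr)
  assume "\<not> cmod l \<le> norm a"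
  then have big: "norm a < cmod l" by simp
  then have l0: "l \<noteq> 0" by auto
  have "norm (scaleC (inverse l) a) < 1"
    using big l0 by (simp add: norm_scaleC norm_inverse norm_divide field_simps)
  then have "invertible_elem (1 - scaleC (inverse l) a)" by (rule invertible_one_minus)
  moreover have "a - scaleC l 1 = scaleC (- l) (1 - scaleC (inverse l) a)"
    using l0 by (simp add: scaleC_diff_right scaleC_scaleC scaleC_minus_left)
  ultimately have "invertible_elem (a - scaleC l 1)"
    using l0 by (simp add: invertible_scaleC)
  then show False using assms mem_spectrum_iff by blast
qed

lemma mem_spectrum_scaleC:
  assumes "c \<noteq> 0"
  shows "l \<in> spectrum (scaleC c a) \<longleftrightarrow> l / c \<in> spectrum a"
proof -
  have "scaleC c a - scaleC l 1 = scaleC c (a - scaleC (l / c) 1)"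
    using assms by (simp add: scaleC_diff_right scaleC_scaleC)
  then show ?thesis using invertible_scaleC_iff[OF assms] mem_spectrum_iff by metis
qed

text \<open>If \<open>\<alpha> + i \<beta>\<close> with \<open>\<beta> \<noteq> 0\<close> were in the spectrum of \<open>h\<close>, then with \<open>y = h - \<alpha>\<close> the
  C*-identity would give \<open>(\<beta> + t)\<^sup>2 \<le> \<parallel>y + i t\<parallel>\<^sup>2 \<le> \<parallel>y\<parallel>\<^sup>2 + t\<^sup>2\<close> for all real \<open>t\<close>.\<close>
lemma spectrum_self_adjoint_real:
  assumes sa: "star h = h" and l: "l \<in> spectrum h"
  shows "Im l = 0"
proof (rule ccontr)
  assume b0: "Im l \<noteq> 0"
  define \<alpha> where "\<alpha> = Re l"
  define \<beta> where "\<beta> = Im l"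
  define y where "y = h - scaleC (complex_of_real \<alpha>) 1"
  have ysa: "star y = y" unfolding y_def using sa by (simp add: star_diff star_scaleC)
  have key: "(\<beta> + t)\<^sup>2 \<le> norm y ^ 2 + t\<^sup>2" for t :: real
  proof -
    define c where "c = \<i> * complex_of_real t"
    define w where "w = y + scaleC c 1"
    have "w - scaleC (\<i> * complex_of_real (\<beta> + t)) 1 = h - scaleC l 1"
    proof -
      have "l = complex_of_real \<alpha> + \<i> * complex_of_real \<beta>"
        unfolding \<alpha>_def \<beta>_def by (simp add: complex_eq_iff)
      then show ?thesis unfolding w_def y_def c_def
        by (simp add: scaleC_add_left scaleC_diff_left algebra_simps distrib_left)
    qed
    then have "\<i> * complex_of_real (\<beta> + t) \<in> spectrum w" using l mem_spectrum_iff by simp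
    then have "cmod (\<i> * complex_of_real (\<beta> + t)) \<le> norm w" by (rule norm_le_if_mem_spectrum)
    then have "\<bar>\<beta> + t\<bar> \<le> norm w" by (simp add: norm_mult flip: of_real_add)
    then have "(\<beta> + t)\<^sup>2 \<le> norm w ^ 2" by (metis abs_ge_zero power2_abs power_mono)
    also have "norm w ^ 2 = norm (star w * w)" by (simp add: cstar_identity)
    also have "star w * w = y * y + scaleC (complex_of_real (t\<^sup>2)) 1"
    proof -
      have "star w = y - scaleC c 1"
        unfolding w_def c_def by (simp add: star_add star_scaleC ysa scaleC_minus_left)
      then have "star w * w = (y - scaleC c 1) * (y + scaleC c 1)" by (simp add: w_def)
      also have "\<dots> = y * y + y * scaleC c 1 - scaleC c 1 * y - scaleC c 1 * scaleC c 1"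
        by (simp add: algebra_simps)
      also have "\<dots> = y * y - scaleC c 1 * scaleC c 1"
        by (simp only: scaleC_one_mult mult_scaleC_one) simp
      also have "scaleC c 1 * scaleC c 1 = - scaleC (complex_of_real (t\<^sup>2)) 1"
        unfolding c_def by (simp add: scaleC_mult_both power2_eq_square scaleC_minus_left[symmetric])
          (rule arg_cong[where f="\<lambda>c. scaleC c 1"], simp add: algebra_simps)
      finally show ?thesis by simp
    qed
    also have "norm \<dots> \<le> norm (y * y) + t\<^sup>2"
      using norm_triangle_ineq[of "y * y" "scaleC (complex_of_real (t\<^sup>2)) 1"] by (simp add: norm_scaleC norm_power)
    also have "\<dots> = norm y ^ 2 + t\<^sup>2" using norm_square_self_adjoint[OF ysa] by simp
    finally show ?thesis .
  qed
  define t where "t = (norm y ^ 2 + 1) / (2 * \<beta>)"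
  have "2 * \<beta> * t = norm y ^ 2 + 1" unfolding t_def using b0 \<beta>_def by simp
  moreover have "(\<beta> + t)\<^sup>2 = \<beta>\<^sup>2 + 2 * \<beta> * t + t\<^sup>2" by (simp add: power2_eq_square algebra_simps)
  ultimately show False using key[of t] by (smt (verit) zero_le_power2)
qed

lemma positive_elem_square:
  assumes sa: "star y = y"
  shows "positive_elem scaleC star (y * y)"
  unfolding positive_elem_def
proof
  show "star (y * y) = y * y" by (simp add: star_mult sa)
  show "\<forall>l\<in>spectrum (y * y). Im l = 0 \<and> 0 \<le> Re l"
  proof
  fix l assume l: "l \<in> spectrum (y * y)"
  show "Im l = 0 \<and> 0 \<le> Re l"
  proof (rule ccontr)
    assume nl: "\<not> (Im l = 0 \<and> 0 \<le> Re l)"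
    define s where "s = csqrt l"
    have ss: "s * s = l" unfolding s_def by (metis power2_csqrt power2_eq_square)
    have "Im s \<noteq> 0"
    proof
      assume "Im s = 0"
      then have "Im l = 0 \<and> Re l = (Re s)\<^sup>2"
        by (simp add: complex_eq_iff power2_eq_square flip: ss)
      then show False using nl by simp
    qed
    then have "invertible_elem (y - scaleC s 1)" "invertible_elem (y - scaleC (- s) 1)"
      using spectrum_self_adjoint_real[OF sa, of s] spectrum_self_adjoint_real[OF sa, of "-s"]
      by (auto simp: mem_spectrum_iff)
    then have "invertible_elem ((y - scaleC s 1) * (y - scaleC (- s) 1))"
      by (rule invertible_elem_mult)
    also have "(y - scaleC s 1) * (y - scaleC (- s) 1) =
        y * y - y * scaleC (-s) 1 - scaleC s 1 * y + scaleC s 1 * scaleC (-s) 1"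
      by (simp add: algebra_simps)
    also have "\<dots> = y * y - scaleC l 1"
      by (simp add: mult_scaleC_one scaleC_one_mult scaleC_scaleC scaleC_minus_left flip: ss)
    finally show False using l mem_spectrum_iff by blast
  qed
  qed
qed

end

section \<open>Spectral radius of self-adjoint elements\<close>

lemma one_diff_power_sum_left:
  fixes y :: "'a::ring_1"
  shows "(1 - y) * (\<Sum>j<n. y ^ j) = 1 - y ^ n"
proof (induction n)
  case (Suc n)
  have "(1 - y) * (\<Sum>j<Suc n. y ^ j) = (1 - y) * (\<Sum>j<n. y ^ j) + (1 - y) * y ^ n"
    by (simp add: distrib_left)
  also have "\<dots> = 1 - y ^ Suc n" by (simp only: Suc.IH power_Suc) (simp add: algebra_simps)
  finally show ?case .
qed simp

lemma one_diff_power_sum_right: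
  fixes y :: "'a::ring_1"
  shows "(\<Sum>j<n. y ^ j) * (1 - y) = 1 - y ^ n"
proof (induction n)
  case (Suc n)
  have "(\<Sum>j<Suc n. y ^ j) * (1 - y) = (\<Sum>j<n. y ^ j) * (1 - y) + y ^ n * (1 - y)"
    by (simp add: distrib_right)
  also have "\<dots> = 1 - y ^ Suc n" by (simp only: Suc.IH power_Suc2) (simp add: algebra_simps)
  finally show ?case .
qed simp

text \<open>The key identities are \<open>A - 1 = A z\<close> and \<open>w = (1 - w) (B - 1)\<close>.\<close>
lemma norm_le_quarter_if_inverse_close:
  fixes A B z w :: "'a::real_normed_algebra_1"
  assumes A: "A * (1 - z) = 1" and B: "(1 - w) * B = 1" and M: "norm A \<le> M" "0 \<le> M"
    and z: "norm z \<le> 1 / (10 * (M + 1))" and AB: "norm (B - A) \<le> 1/10"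
  shows "norm w \<le> 1/4"
proof -
  have "A - 1 = A * z" using A by (simp add: algebra_simps)
  then have "norm (A - 1) \<le> norm A * norm z" by (simp add: norm_mult_ineq)
  also have "\<dots> \<le> M * (1 / (10 * (M + 1)))" using M z by (intro mult_mono) auto
  also have "\<dots> \<le> 1/10" using M by (simp add: field_simps)
  finally have B1: "norm (B - 1) \<le> 1/5"
    using AB norm_triangle_ineq[of "B - A" "A - 1"] by simp
  have "w = (1 - w) * (B - 1)" using B by (simp add: algebra_simps)
  then have "norm w \<le> norm (1 - w) * norm (B - 1)" by (metis norm_mult_ineq)
  also have "\<dots> \<le> (1 + norm w) * (1/5)"
    using B1 norm_triangle_ineq4[of 1 w] by (intro mult_mono) auto
  finally have "norm w \<le> (1 + norm w) * (1/5)" .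
  then show ?thesis by simp
qed

definition root_unity :: "nat \<Rightarrow> nat \<Rightarrow> complex" where
  "root_unity N k = exp (2 * of_real pi * \<i> * of_nat k / of_nat N)"

lemma norm_root_unity [simp]: "cmod (root_unity N k) = 1"
  unfolding root_unity_def by (simp add: norm_exp_eq_Re)

lemma root_unity_power_eq_1: "N \<ge> 1 \<Longrightarrow> root_unity N k ^ N = 1"
  unfolding root_unity_def using complex_root_unity[of N k] by simp

lemma sum_root_unity_power:
  assumes "N \<ge> 1" "j < N"
  shows "(\<Sum>k<N. (root_unity N k * c) ^ j) = (if j = 0 then of_nat N else 0)"
proof (cases "j = 0")
  case False
  define w where "w = exp (2 * of_real pi * \<i> * of_nat j / of_nat N)"
  have "root_unity N k ^ j = w ^ k" for k
  proof -
    have "root_unity N k ^ j = exp (of_nat j * (2 * of_real pi * \<i> * of_nat k / of_nat N))"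
      unfolding root_unity_def by (rule exp_of_nat_mult[symmetric])
    also have "\<dots> = exp (of_nat k * (2 * of_real pi * \<i> * of_nat j / of_nat N))"
      by (simp add: algebra_simps)
    also have "\<dots> = w ^ k" unfolding w_def by (rule exp_of_nat_mult)
    finally show ?thesis .
  qed
  then have "(\<Sum>k<N. (root_unity N k * c) ^ j) = c ^ j * (\<Sum>k<N. w ^ k)"
    by (simp add: power_mult_distrib sum_distrib_left mult.commute)
  moreover have "w ^ N = 1" unfolding w_def using assms complex_root_unity by simp
  moreover have "w \<noteq> 1"
    unfolding w_def using assms False complex_root_unity_eq_1[of N j] by (auto dest: dvd_imp_le)
  ultimately show ?thesis using False by (simp add: geometric_sum)
qed simp

lemma power_mult_LIMSEQ_zero_below:
  fixes a :: "nat \<Rightarrow> real"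
  assumes a: "\<And>N. a N \<ge> 0" and t: "eventually (\<lambda>N. t ^ N * a N \<le> 1/2) sequentially"
    and s: "0 \<le> s" "s < t"
  shows "(\<lambda>N. s ^ N * a N) \<longlonglongrightarrow> 0"
proof -
  have upper: "eventually (\<lambda>N. s ^ N * a N \<le> (s / t) ^ N * (1/2)) sequentially"
    using t
  proof eventually_elim
    case (elim N)
    have "s ^ N * a N = (s / t) ^ N * (t ^ N * a N)"
      using s by (simp add: power_divide)
    also have "\<dots> \<le> (s / t) ^ N * (1/2)" using elim s by (intro mult_left_mono) auto
    finally show ?case .
  qed
  have lower: "eventually (\<lambda>N. 0 \<le> s ^ N * a N) sequentially"
    using a s by simp
  have "(\<lambda>N. (s / t) ^ N * (1/2)) \<longlonglongrightarrow> 0"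
    using s by (intro tendsto_mult_left_zero LIMSEQ_power_zero) simp
  then show ?thesis by (rule tendsto_sandwich[OF lower upper tendsto_const])
qed

lemma eventually_le_half_by_continuation:
  fixes a :: "nat \<Rightarrow> real" and \<eta> :: real
  assumes a: "\<And>N. a N \<ge> 0" and \<eta>: "\<eta> > 0"
    and step: "\<And>s t. 0 \<le> s \<Longrightarrow> s \<le> 1 \<Longrightarrow> 0 \<le> t \<Longrightarrow> t \<le> 1 \<Longrightarrow> \<bar>t - s\<bar> < \<eta> \<Longrightarrow>
      (\<lambda>N. s ^ N * a N) \<longlonglongrightarrow> 0 \<Longrightarrow> eventually (\<lambda>N. t ^ N * a N \<le> 1/2) sequentially"
  shows "eventually (\<lambda>N. a N \<le> 1/2) sequentially"
proof -
  define strong where "strong s \<longleftrightarrow> (\<lambda>N. s ^ N * a N) \<longlonglongrightarrow> 0" for s :: real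
  define weak where "weak t \<longleftrightarrow> eventually (\<lambda>N. t ^ N * a N \<le> 1/2) sequentially" for t :: real
  have strong_0: "strong 0"
    unfolding strong_def by (rule LIMSEQ_imp_Suc) simp
  have strong_below: "strong s" if "weak t" "0 \<le> s" "s < t" for s t
    using a that(1)[unfolded weak_def] that(2,3) unfolding strong_def
    by (rule power_mult_LIMSEQ_zero_below)
  have "weak t" if "0 \<le> t" "t \<le> 1" "t \<le> real k * \<eta> / 2" for k t
    using that
  proof (induction k arbitrary: t)
    case 0
    then have "t = 0" by simp
    have "0 ^ N * a N \<le> 1/2" if "N \<ge> 1" for N :: nat
      using that by (simp add: power_0_left)
    then show ?case unfolding weak_def \<open>t = 0\<close> by (rule eventually_sequentiallyI)
  next
    case (Suc k)
    define t' where "t' = real k * \<eta> / 2"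
    show ?case
    proof (cases "t \<le> t'")
      case True
      then show ?thesis using Suc unfolding t'_def by blast
    next
      case False
      have t': "0 \<le> t'" "t' < t" using False \<eta> unfolding t'_def by auto
      define s where "s = max 0 (t' - \<eta> / 4)"
      have "strong s"
      proof (cases "s = 0")
        case False
        have "weak t'" using Suc.IH[of t'] t' Suc.prems unfolding t'_def by simp
        with False show ?thesis using \<eta> unfolding s_def by (intro strong_below) auto
      qed (simp add: strong_0)
      moreover have "\<bar>t - s\<bar> < \<eta>"
      proof -
        have "t \<le> t' + \<eta> / 2" using Suc.prems(3) unfolding t'_def by (simp add: field_simps)
        then show ?thesis using t' \<eta> unfolding s_def by (auto simp: max_def)
      qed
      moreover have "0 \<le> s" "s \<le> 1" using t' Suc.prems \<eta> unfolding s_def by simp_all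
      ultimately show ?thesis
        using step[of s t] Suc.prems unfolding strong_def weak_def by blast
    qed
  qed
  moreover obtain k :: nat where "2 / \<eta> \<le> real k" using real_arch_simple by blast
  then have "1 \<le> real k * \<eta> / 2" using \<eta> by (simp add: field_simps)
  ultimately have "weak 1" by simp
  then show ?thesis unfolding weak_def by simp
qed

context unital_cstar_algebra
begin

lemma tendsto_scaleC_left:
  assumes "(f \<longlongrightarrow> c) F"
  shows "((\<lambda>y. scaleC (f y) x) \<longlongrightarrow> scaleC c x) F"
proof -
  have "((\<lambda>y. scaleC (f y) x - scaleC c x) \<longlongrightarrow> 0) F"
  proof (rule Lim_null_comparison)
    show "eventually (\<lambda>y. norm (scaleC (f y) x - scaleC c x) \<le> cmod (f y - c) * norm x) F"
      by (simp add: scaleC_diff_left[symmetric] norm_scaleC)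
    have "((\<lambda>y. cmod (f y - c)) \<longlongrightarrow> 0) F"
      using assms by (simp add: tendsto_norm_zero_iff Lim_null[symmetric])
    then show "((\<lambda>y. cmod (f y - c) * norm x) \<longlongrightarrow> 0) F"
      by (simp add: tendsto_mult_left_zero)
  qed
  then show ?thesis by (simp add: Lim_null[symmetric])
qed

definition resolvent_average :: "'a \<Rightarrow> nat \<Rightarrow> complex \<Rightarrow> 'a" where
  "resolvent_average x N \<mu> =
     scaleC (1 / of_nat N) (\<Sum>k<N. inverse_elem (1 - scaleC (root_unity N k * \<mu>) x))"

text \<open>The factorisations \<open>1 - \<mu>\<^sup>N x\<^sup>N = (1 - \<omega> \<mu> x) \<Sum>\<^sub>j<\<^sub>N (\<omega> \<mu> x)\<^sup>j\<close> over the \<open>N\<close>-th roots of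
  unity \<open>\<omega>\<close> sum up to \<open>N\<close> times \<open>1\<close>.\<close>
lemma resolvent_average_inverse:
  assumes N: "N \<ge> 1" and inv: "\<And>k. invertible_elem (1 - scaleC (root_unity N k * \<mu>) x)"
  shows "resolvent_average x N \<mu> * (1 - scaleC (\<mu> ^ N) (x ^ N)) = 1"
    "(1 - scaleC (\<mu> ^ N) (x ^ N)) * resolvent_average x N \<mu> = 1"
proof -
  define y where "y k = scaleC (root_unity N k * \<mu>) x" for k
  define G where "G k = (\<Sum>j<N. y k ^ j)" for k
  have yN: "y k ^ N = scaleC (\<mu> ^ N) (x ^ N)" for k
    unfolding y_def using root_unity_power_eq_1[OF N] by (simp add: scaleC_power power_mult_distrib)
  have G: "inverse_elem (1 - y k) * (1 - scaleC (\<mu> ^ N) (x ^ N)) = G k"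
    "(1 - scaleC (\<mu> ^ N) (x ^ N)) * inverse_elem (1 - y k) = G k" for k
  proof -
    have iv: "invertible_elem (1 - y k)" unfolding y_def by (rule inv)
    have "inverse_elem (1 - y k) * (1 - scaleC (\<mu> ^ N) (x ^ N))
        = (inverse_elem (1 - y k) * (1 - y k)) * G k"
      unfolding G_def yN[of k, symmetric] one_diff_power_sum_left[symmetric] by (simp add: mult.assoc)
    then show "inverse_elem (1 - y k) * (1 - scaleC (\<mu> ^ N) (x ^ N)) = G k"
      using inverse_elem_left[OF iv] by simp
    have "(1 - scaleC (\<mu> ^ N) (x ^ N)) * inverse_elem (1 - y k)
        = G k * ((1 - y k) * inverse_elem (1 - y k))"
      unfolding G_def yN[of k, symmetric] one_diff_power_sum_right[symmetric] by (simp add: mult.assoc)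
    then show "(1 - scaleC (\<mu> ^ N) (x ^ N)) * inverse_elem (1 - y k) = G k"
      using inverse_elem_right[OF iv] by simp
  qed
  have "(\<Sum>k<N. G k) = (\<Sum>j<N. scaleC (\<Sum>k<N. (root_unity N k * \<mu>) ^ j) (x ^ j))"
    unfolding G_def y_def scaleC_power scaleC_sum_left by (rule sum.swap)
  also have "\<dots> = (\<Sum>j<N. if j = 0 then scaleC (of_nat N) 1 else 0)"
    by (rule sum.cong) (use N in \<open>auto simp: sum_root_unity_power\<close>)
  also have "\<dots> = scaleC (of_nat N) 1" using N by (simp add: sum.delta)
  finally have sumG: "scaleC (1 / of_nat N) (\<Sum>k<N. G k) = 1"
    using N by (simp add: scaleC_scaleC)
  show "resolvent_average x N \<mu> * (1 - scaleC (\<mu> ^ N) (x ^ N)) = 1"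
    unfolding resolvent_average_def y_def[symmetric] using sumG
    by (simp add: scaleC_mult_left[symmetric] sum_distrib_right G)
  show "(1 - scaleC (\<mu> ^ N) (x ^ N)) * resolvent_average x N \<mu> = 1"
    unfolding resolvent_average_def y_def[symmetric] using sumG
    by (simp add: scaleC_mult_right[symmetric] sum_distrib_left G)
qed

lemma norm_resolvent_average_le:
  assumes "N \<ge> 1" and bound: "\<And>k. norm (inverse_elem (1 - scaleC (root_unity N k * \<mu>) x)) \<le> M"
  shows "norm (resolvent_average x N \<mu>) \<le> M"
proof -
  have "norm (\<Sum>k<N. inverse_elem (1 - scaleC (root_unity N k * \<mu>) x)) \<le> (\<Sum>k<N. M)"
    by (intro order_trans[OF norm_sum] sum_mono bound)
  then show ?thesis
    unfolding resolvent_average_def using assms(1) by (simp add: norm_scaleC norm_divide field_simps)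
qed

lemma norm_resolvent_average_diff_le:
  assumes "N \<ge> 1"
    and bound: "\<And>k. norm (inverse_elem (1 - scaleC (root_unity N k * \<mu>) x)
                    - inverse_elem (1 - scaleC (root_unity N k * \<nu>) x)) \<le> e"
  shows "norm (resolvent_average x N \<mu> - resolvent_average x N \<nu>) \<le> e"
proof -
  have "norm (\<Sum>k<N. inverse_elem (1 - scaleC (root_unity N k * \<mu>) x)
      - inverse_elem (1 - scaleC (root_unity N k * \<nu>) x)) \<le> (\<Sum>k<N. e)"
    by (intro order_trans[OF norm_sum] sum_mono bound)
  then show ?thesis
    unfolding resolvent_average_def using assms(1)
    by (simp add: sum_subtractf norm_scaleC norm_divide field_simps flip: scaleC_diff_right)
qed

lemma continuous_on_resolvent:
  assumes "\<And>l. l \<in> D \<Longrightarrow> invertible_elem (1 - scaleC l x)"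
  shows "continuous_on D (\<lambda>l. inverse_elem (1 - scaleC l x))"
  unfolding continuous_on_def
proof
  fix l assume "l \<in> D"
  have "((\<lambda>m. 1 - scaleC m x) \<longlongrightarrow> 1 - scaleC l x) (at l within D)"
    by (intro tendsto_diff tendsto_const tendsto_scaleC_left tendsto_ident_at)
  then show "((\<lambda>m. inverse_elem (1 - scaleC m x)) \<longlongrightarrow> inverse_elem (1 - scaleC l x)) (at l within D)"
    by (rule tendsto_inverse_elem) (use assms \<open>l \<in> D\<close> in simp)
qed

lemma eventually_norm_power_le_half:
  assumes inv: "\<And>l. cmod l \<le> 1 \<Longrightarrow> invertible_elem (1 - scaleC l x)"
  shows "eventually (\<lambda>N. norm (x ^ N) \<le> 1/2) sequentially"
proof -
  define D where "D = cball (0::complex) 1"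
  define \<phi> where "\<phi> l = inverse_elem (1 - scaleC l x)" for l
  have cont: "continuous_on D \<phi>" unfolding \<phi>_def D_def by (rule continuous_on_resolvent) (simp add: inv)
  have "compact D" by (simp add: D_def)
  then obtain M where M: "\<And>l. l \<in> D \<Longrightarrow> norm (\<phi> l) \<le> M"
    using compact_imp_bounded[OF compact_continuous_image[OF cont]] unfolding bounded_iff by auto
  have M0: "M \<ge> 0" using M[of 0] by (simp add: D_def) (metis norm_ge_zero order_trans)
  obtain \<eta> where \<eta>: "\<eta> > 0"
    and unif: "\<And>l m. l \<in> D \<Longrightarrow> m \<in> D \<Longrightarrow> dist m l < \<eta> \<Longrightarrow> dist (\<phi> m) (\<phi> l) < 1/10"
    using compact_uniformly_continuous[OF cont \<open>compact D\<close>] unfolding uniformly_continuous_on_def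
    by (metis divide_pos_pos zero_less_numeral zero_less_one)
  have inD: "root_unity N k * complex_of_real t \<in> D" if "0 \<le> t" "t \<le> 1" for N k t
    using that by (simp add: D_def norm_mult)
  define A where "A N t = resolvent_average x N (complex_of_real t)" for N t
  define z where "z N t = scaleC (complex_of_real t ^ N) (x ^ N)" for N t
  have norm_z: "norm (z N t) = t ^ N * norm (x ^ N)" if "0 \<le> t" for N t
    unfolding z_def using that by (simp add: norm_scaleC norm_power)
  have A_inverse: "A N t * (1 - z N t) = 1" "(1 - z N t) * A N t = 1"
    if "N \<ge> 1" "0 \<le> t" "t \<le> 1" for N t
    unfolding A_def z_def using resolvent_average_inverse[OF \<open>N \<ge> 1\<close>] inv inD[OF that(2,3)]
    by (simp_all add: D_def)
  have norm_A: "norm (A N t) \<le> M" if "N \<ge> 1" "0 \<le> t" "t \<le> 1" for N t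
    unfolding A_def using M[OF inD[OF that(2,3)]] unfolding \<phi>_def
    by (rule norm_resolvent_average_le[OF \<open>N \<ge> 1\<close>])
  have norm_A_diff: "norm (A N t - A N s) \<le> 1/10"
    if "N \<ge> 1" "0 \<le> t" "t \<le> 1" "0 \<le> s" "s \<le> 1" "\<bar>t - s\<bar> < \<eta>" for N t s
    unfolding A_def
  proof (rule norm_resolvent_average_diff_le[OF \<open>N \<ge> 1\<close>])
    fix k
    have "dist (root_unity N k * complex_of_real t) (root_unity N k * complex_of_real s) < \<eta>"
      using that by (simp add: dist_norm norm_mult flip: right_diff_distrib of_real_diff)
    then show "norm (inverse_elem (1 - scaleC (root_unity N k * complex_of_real t) x)
        - inverse_elem (1 - scaleC (root_unity N k * complex_of_real s) x)) \<le> 1/10"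
      using unif[of "root_unity N k * complex_of_real s" "root_unity N k * complex_of_real t"]
        inD[OF that(2,3)] inD[OF that(4,5)]
      by (simp add: dist_norm \<phi>_def)
  qed
  show ?thesis
  proof (rule eventually_le_half_by_continuation[OF norm_ge_zero \<eta>])
    fix s t :: real
    assume s: "0 \<le> s" "s \<le> 1" and t: "0 \<le> t" "t \<le> 1" and st: "\<bar>t - s\<bar> < \<eta>"
      and lim: "(\<lambda>N. s ^ N * norm (x ^ N)) \<longlonglongrightarrow> 0"
    have "eventually (\<lambda>N. N \<ge> 1 \<and> s ^ N * norm (x ^ N) < 1 / (10 * (M + 1))) sequentially"
      using lim M0 by (intro eventually_conj eventually_ge_at_top order_tendstoD(2)) auto
    then show "eventually (\<lambda>N. t ^ N * norm (x ^ N) \<le> 1/2) sequentially"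
    proof eventually_elim
      case (elim N)
      then have N: "N \<ge> 1" by simp
      have "norm (z N s) \<le> 1 / (10 * (M + 1))" using elim norm_z[OF s(1)] by simp
      then have "norm (z N t) \<le> 1/4"
        by (rule norm_le_quarter_if_inverse_close[OF A_inverse(1)[OF N s] A_inverse(2)[OF N t]
              norm_A[OF N s] M0 _ norm_A_diff[OF N t s st]])
      then show ?case using norm_z[OF t(1)] by simp
    qed
  qed
qed

text \<open>If \<open>\<parallel>k\<parallel> > m\<close>, then for \<open>x = k / \<parallel>k\<parallel>\<close> all \<open>1 - l x\<close> with \<open>|l| \<le> 1\<close> are invertible, so
  \<open>\<parallel>x\<^sup>N\<parallel> \<le> 1/2\<close> eventually; but \<open>x\<close> to the power \<open>2\<^sup>N\<close> has norm \<open>1\<close> by the C*-identity.\<close>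
lemma norm_self_adjoint_le:
  assumes sa: "star k = k" and m: "0 \<le> m" and sp: "\<And>l. l \<in> spectrum k \<Longrightarrow> cmod l \<le> m"
  shows "norm k \<le> m"
proof (rule ccontr)
  assume "\<not> norm k \<le> m"
  then have big: "norm k > m" by simp
  define c where "c = norm k"
  have c0: "c > 0" using big m unfolding c_def by linarith
  define x where "x = scaleC (complex_of_real (1 / c)) k"
  have "star x = x" unfolding x_def by (simp only: star_scaleR sa)
  then have norm_pow: "norm (x ^ (2 ^ N)) = 1" for N
    using norm_power_two_power_self_adjoint c0 unfolding x_def c_def by (simp add: norm_scaleC norm_divide)
  have "eventually (\<lambda>N. norm (x ^ N) \<le> 1/2) sequentially"
  proof (rule eventually_norm_power_le_half)
    fix l :: complex assume l: "cmod l \<le> 1"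
    show "invertible_elem (1 - scaleC l x)"
    proof (cases "l = 0")
      case False
      have "c \<le> c / cmod l" using l False c0 by (simp add: field_simps mult_left_le)
      then have "complex_of_real c / l \<notin> spectrum k"
        using sp big c0 unfolding c_def by (force simp: norm_divide)
      then have "invertible_elem (k - scaleC (complex_of_real c / l) 1)" using mem_spectrum_iff by blast
      moreover have "1 - scaleC l x = scaleC (- l / complex_of_real c) (k - scaleC (complex_of_real c / l) 1)"
        unfolding x_def using False c0
        by (simp add: scaleC_diff_right scaleC_scaleC field_simps scaleC_minus_left)
      ultimately show ?thesis using False c0 by (simp add: invertible_scaleC)
    qed simp
  qed
  then obtain N0 where "\<And>N. N \<ge> N0 \<Longrightarrow> norm (x ^ N) \<le> 1/2" unfolding eventually_sequentially by blast
  then have "norm (x ^ (2 ^ N0)) \<le> 1/2" by (simp add: less_imp_le)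
  then show False using norm_pow by simp
qed

end

section \<open>Polynomial calculus and spectral mapping\<close>

abbreviation of_real_poly :: "real poly \<Rightarrow> complex poly" where
  "of_real_poly P \<equiv> map_poly complex_of_real P"

lemma of_real_poly_add: "of_real_poly (P + Q) = of_real_poly P + of_real_poly Q"
  by (intro poly_eqI) (simp add: coeff_map_poly)

lemma of_real_poly_diff: "of_real_poly (P - Q) = of_real_poly P - of_real_poly Q"
  by (intro poly_eqI) (simp add: coeff_map_poly)

lemma of_real_poly_mult: "of_real_poly (P * Q) = of_real_poly P * of_real_poly Q"
  by (intro poly_eqI) (simp add: coeff_map_poly coeff_mult)

lemma poly_of_real_poly: "poly (of_real_poly P) (complex_of_real x) = complex_of_real (poly P x)"
  by (induction P) (simp_all add: map_poly_pCons)

context unital_cstar_algebra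
begin

definition peval :: "'a \<Rightarrow> complex poly \<Rightarrow> 'a" where
  "peval h p = (\<Sum>i\<le>degree p. scaleC (coeff p i) (h ^ i))"

lemma peval_eq_sum_lessThan:
  assumes "degree p < n"
  shows "peval h p = (\<Sum>i<n. scaleC (coeff p i) (h ^ i))"
  unfolding peval_def using assms by (intro sum.mono_neutral_left) (auto simp: coeff_eq_0)

lemma peval_0 [simp]: "peval h 0 = 0"
  by (simp add: peval_def)

lemma peval_add: "peval h (p + q) = peval h p + peval h q"
proof -
  define n where "n = Suc (max (degree p) (degree q))"
  have "degree (p + q) < n" "degree p < n" "degree q < n"
    unfolding n_def using degree_add_le_max[of p q] by auto
  then show ?thesis by (simp add: peval_eq_sum_lessThan scaleC_add_left sum.distrib)
qed

lemma peval_smult: "peval h (smult c p) = scaleC c (peval h p)"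
proof -
  define n where "n = Suc (degree p)"
  have "degree (smult c p) < n" unfolding n_def by (simp add: le_imp_less_Suc)
  then have "peval h (smult c p) = scaleC c (\<Sum>i<n. scaleC (coeff p i) (h ^ i))"
    by (simp add: peval_eq_sum_lessThan scaleC_sum_right scaleC_scaleC)
  also have "(\<Sum>i<n. scaleC (coeff p i) (h ^ i)) = peval h p"
    using peval_eq_sum_lessThan[of p n h] unfolding n_def by (simp only: lessI)
  finally show ?thesis .
qed

lemma peval_diff: "peval h (p - q) = peval h p - peval h q"
  using peval_add[of h p "-q"] peval_smult[of h "-1" q] by (simp add: scaleC_minus_left)

lemma peval_pCons: "peval h (pCons a p) = scaleC a 1 + h * peval h p"
proof -
  define n where "n = Suc (degree p)"
  have "degree (pCons a p) < Suc n" unfolding n_def by (metis degree_pCons_le le_imp_less_Suc)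
  then have "peval h (pCons a p) = (\<Sum>i<Suc n. scaleC (coeff (pCons a p) i) (h ^ i))"
    by (rule peval_eq_sum_lessThan)
  also have "\<dots> = scaleC a 1 + (\<Sum>i<n. scaleC (coeff p i) (h ^ Suc i))"
    by (subst sum.lessThan_Suc_shift) simp
  also have "(\<Sum>i<n. scaleC (coeff p i) (h ^ Suc i)) = h * (\<Sum>i<n. scaleC (coeff p i) (h ^ i))"
    by (simp add: sum_distrib_left scaleC_mult_right)
  also have "(\<Sum>i<n. scaleC (coeff p i) (h ^ i)) = peval h p"
    using peval_eq_sum_lessThan[of p n h] unfolding n_def by (simp only: lessI)
  finally show ?thesis .
qed

lemma peval_const [simp]: "peval h [:c:] = scaleC c 1"
  by (simp add: peval_pCons)

lemma peval_mult: "peval h (p * q) = peval h p * peval h q"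
proof (induction p)
  case (pCons a p)
  have "peval h (pCons a p * q) = scaleC a (peval h q) + h * peval h (p * q)"
    by (simp add: peval_add peval_smult peval_pCons)
  also have "\<dots> = (scaleC a 1 + h * peval h p) * peval h q"
    using pCons.IH by (simp add: distrib_right scaleC_one_mult mult.assoc)
  finally show ?case by (simp add: peval_pCons)
qed simp

lemma peval_linear: "peval h [:- c, 1:] = h - scaleC c 1"
  by (simp add: peval_pCons scaleC_minus_left)

lemma peval_of_real_poly_self_adjoint:
  assumes "star h = h"
  shows "star (peval h (of_real_poly P)) = peval h (of_real_poly P)"
  unfolding peval_def by (simp add: star_sum star_scaleC star_power assms coeff_map_poly)

text \<open>By the fundamental theorem of algebra, \<open>p(h)\<close> factors into the invertible elements
  \<open>h - z\<close> over the roots \<open>z\<close> of \<open>p\<close>.\<close>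
lemma invertible_peval:
  assumes "p \<noteq> 0" "\<And>z. poly p z = 0 \<Longrightarrow> z \<notin> spectrum h"
  shows "invertible_elem (peval h p)"
  using assms
proof (induction "degree p" arbitrary: p rule: less_induct)
  case less
  show ?case
  proof (cases "degree p = 0")
    case True
    then obtain c where p: "p = [:c:]" by (metis degree_eq_zeroE)
    then have "c \<noteq> 0" using less.prems by simp
    then show ?thesis unfolding p by (simp add: invertible_scaleC)
  next
    case False
    then have "\<not> (\<exists>a l. a \<noteq> 0 \<and> l = 0 \<and> p = pCons a l)" by auto
    then obtain z where z: "poly p z = 0" using fundamental_theorem_of_algebra_alt by blast
    then obtain r where r: "p = [:- z, 1:] * r" using poly_eq_0_iff_dvd by (metis dvdE)
    have r0: "r \<noteq> 0" using less.prems(1) r by auto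
    have "degree ([:- z, 1:] * r) = degree [:- z, 1:] + degree r"
      by (rule degree_mult_eq) (use r0 in auto)
    then have "degree r < degree p" using r by simp
    moreover have "poly r w = 0 \<Longrightarrow> w \<notin> spectrum h" for w
      using less.prems(2)[of w] r by simp
    ultimately have "invertible_elem (peval h r)" using less.hyps r0 by blast
    moreover have "invertible_elem (h - scaleC z 1)"
      using less.prems(2) z mem_spectrum_iff by blast
    ultimately show ?thesis
      unfolding r peval_mult peval_linear by (rule invertible_elem_mult[rotated])
  qed
qed

definition real_spectrum :: "'a \<Rightarrow> real set" where
  "real_spectrum h = {x. complex_of_real x \<in> spectrum h}"

lemma abs_le_norm_if_mem_real_spectrum: "x \<in> real_spectrum h \<Longrightarrow> \<bar>x\<bar> \<le> norm h"
  unfolding real_spectrum_def using norm_le_if_mem_spectrum by fastforce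

lemma spectrum_self_adjoint_eq:
  assumes "star h = h"
  shows "spectrum h = complex_of_real ` real_spectrum h"
proof -
  have "l = complex_of_real (Re l)" if "l \<in> spectrum h" for l
    using spectrum_self_adjoint_real[OF assms that] by (simp add: complex_eq_iff)
  then show ?thesis unfolding real_spectrum_def by force
qed

lemma real_spectrum_nonempty:
  assumes "star h = h"
  shows "real_spectrum h \<noteq> {}"
proof
  assume "real_spectrum h = {}"
  then have "spectrum h = {}" using spectrum_self_adjoint_eq[OF assms] by simp
  then have "h = 0" using norm_self_adjoint_le[OF assms, of 0] by simp
  moreover have "0 \<in> spectrum (0::'a)"
    unfolding mem_spectrum_iff invertible_elem_def by simp
  ultimately show False using \<open>spectrum h = {}\<close> by simp
qed

lemma spectrum_peval_of_real_poly:
  assumes sa: "star h = h" and mu: "\<mu> \<in> spectrum (peval h (of_real_poly P))"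
  shows "\<exists>x\<in>real_spectrum h. \<mu> = complex_of_real (poly P x)"
proof (rule ccontr)
  assume nx: "\<not> (\<exists>x\<in>real_spectrum h. \<mu> = complex_of_real (poly P x))"
  define Q where "Q = of_real_poly P - [:\<mu>:]"
  have roots: "z \<notin> spectrum h" if "poly Q z = 0" for z
  proof
    assume "z \<in> spectrum h"
    then obtain x where x: "x \<in> real_spectrum h" "z = complex_of_real x"
      using spectrum_self_adjoint_eq[OF sa] by blast
    then have "\<mu> = complex_of_real (poly P x)" using that by (simp add: Q_def poly_of_real_poly)
    then show False using nx x(1) by blast
  qed
  have "Q \<noteq> 0"
  proof
    assume "Q = 0"
    obtain x where "x \<in> real_spectrum h" using real_spectrum_nonempty[OF sa] by blast
    then show False using roots[of "complex_of_real x"] \<open>Q = 0\<close> unfolding real_spectrum_def by simp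
  qed
  then have "invertible_elem (peval h Q)" using roots by (rule invertible_peval)
  moreover have "peval h Q = peval h (of_real_poly P) - scaleC \<mu> 1" unfolding Q_def by (simp add: peval_diff)
  ultimately show False using mu mem_spectrum_iff by simp
qed

lemma norm_peval_of_real_poly_le:
  assumes sa: "star h = h" and bound: "\<And>x. x \<in> real_spectrum h \<Longrightarrow> \<bar>poly P x\<bar> \<le> m"
  shows "norm (peval h (of_real_poly P)) \<le> m"
proof (rule norm_self_adjoint_le[OF peval_of_real_poly_self_adjoint[OF sa]])
  obtain x0 where "x0 \<in> real_spectrum h" using real_spectrum_nonempty[OF sa] by blast
  then show "0 \<le> m" using bound[of x0] by linarith
  fix l assume "l \<in> spectrum (peval h (of_real_poly P))"
  then obtain x where "x \<in> real_spectrum h" "l = complex_of_real (poly P x)"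
    using spectrum_peval_of_real_poly[OF sa] by blast
  then show "cmod l \<le> m" using bound by simp
qed

end

section \<open>Continuous functional calculus\<close>

lemma real_poly_approx_interval:
  fixes f :: "real \<Rightarrow> real"
  assumes cont: "continuous_on {a..b} f" and ab: "a < b" and e: "e > 0"
  shows "\<exists>P. \<forall>x\<in>{a..b}. \<bar>f x - poly P x\<bar> \<le> e"
proof -
  define g where "g t = f (a + (b - a) * t)" for t
  have "a + (b - a) * t \<in> {a..b}" if "0 \<le> t" "t \<le> 1" for t
  proof -
    have "(b - a) * t \<le> b - a" using ab that mult_left_mono[of t 1 "b - a"] by simp
    moreover have "0 \<le> (b - a) * t" using ab that by simp
    ultimately show ?thesis by simp
  qed
  then have "(\<lambda>t. a + (b - a) * t) ` {0..1} \<subseteq> {a..b}" by auto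
  then have "continuous_on {0..1} g" unfolding g_def
    by (intro continuous_on_compose2[OF cont]) (auto intro!: continuous_intros)
  then obtain N where N: "\<forall>n x. N \<le> n \<and> x \<in> {0..1} \<longrightarrow> \<bar>g x - (\<Sum>k\<le>n. g (k/n) * Bernstein n k x)\<bar> < e"
    using Bernstein_Weierstrass e by blast
  define T where "T = [:- a / (b - a), 1 / (b - a):]"
  have poly_T: "poly T x = (x - a) / (b - a)" for x
    by (simp add: T_def diff_divide_distrib)
  define P where "P = (\<Sum>k\<le>N. smult (g (k/N) * of_nat (N choose k)) (T ^ k * (1 - T) ^ (N - k)))"
  show ?thesis
  proof (intro exI ballI)
    fix x assume x: "x \<in> {a..b}"
    define t where "t = (x - a) / (b - a)"
    have t: "t \<in> {0..1}" using x ab unfolding t_def by (auto simp: field_simps)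
    have "g t = f x" using ab unfolding g_def t_def by simp
    moreover have "poly P x = (\<Sum>k\<le>N. g (k/N) * Bernstein N k t)"
      by (simp add: P_def poly_sum Bernstein_def poly_T t_def mult.assoc)
    ultimately show "\<bar>f x - poly P x\<bar> \<le> e" using N t by force
  qed
qed

lemma LIMSEQ_norm_diff_le:
  fixes X :: "nat \<Rightarrow> 'a::real_normed_vector"
  assumes "X \<longlonglongrightarrow> L" "e \<longlonglongrightarrow> 0" "\<And>k. norm (X k - c) \<le> m + e k"
  shows "norm (L - c) \<le> m"
proof -
  have "(\<lambda>k. norm (X k - c)) \<longlonglongrightarrow> norm (L - c)" by (intro tendsto_intros assms(1))
  moreover have "(\<lambda>k. m + e k) \<longlonglongrightarrow> m + 0" by (intro tendsto_intros assms(2))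
  ultimately have "norm (L - c) \<le> m + 0"
    using assms(3) by (intro tendsto_le[OF sequentially_bot]) auto
  then show ?thesis by simp
qed

lemma LIMSEQ_inverse_Suc: "(\<lambda>k. c * inverse (real (Suc k))) \<longlonglongrightarrow> 0"
  using tendsto_mult_right_zero[OF LIMSEQ_inverse_real_of_nat] by simp

context unital_cstar_algebra
begin

text \<open>\<open>cfc h f\<close> is meaningful only for self-adjoint \<open>h\<close> and continuous \<open>f\<close>; otherwise the
  approximating sequence need not converge and \<open>lim\<close> returns an unspecified value. The
  approximation interval is widened by \<open>1\<close> to stay nondegenerate when \<open>h = 0\<close>.\<close>
definition cfc_approx :: "'a \<Rightarrow> (real \<Rightarrow> real) \<Rightarrow> nat \<Rightarrow> real poly" where
  "cfc_approx h f k = (SOME P. \<forall>x\<in>{- norm h - 1..norm h + 1}. \<bar>f x - poly P x\<bar> \<le> inverse (real (Suc k)))"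

definition cfc :: "'a \<Rightarrow> (real \<Rightarrow> real) \<Rightarrow> 'a" where
  "cfc h f = lim (\<lambda>k. peval h (of_real_poly (cfc_approx h f k)))"

lemma cfc_approx:
  assumes "continuous_on UNIV f" "\<bar>x\<bar> \<le> norm h + 1"
  shows "\<bar>f x - poly (cfc_approx h f k) x\<bar> \<le> inverse (real (Suc k))"
proof -
  have "- norm h - 1 < norm h + 1" using norm_ge_zero[of h] by linarith
  then have "\<exists>P. \<forall>x\<in>{- norm h - 1..norm h + 1}. \<bar>f x - poly P x\<bar> \<le> inverse (real (Suc k))"
    by (intro real_poly_approx_interval continuous_on_subset[OF assms(1)]) simp_all
  then have "\<forall>x\<in>{- norm h - 1..norm h + 1}. \<bar>f x - poly (cfc_approx h f k) x\<bar> \<le> inverse (real (Suc k))"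
    unfolding cfc_approx_def by (rule someI_ex)
  moreover have "x \<in> {- norm h - 1..norm h + 1}" using assms(2) by (simp add: abs_le_iff)
  ultimately show ?thesis by blast
qed

lemma cfc_approx_real_spectrum:
  assumes "continuous_on UNIV f" "x \<in> real_spectrum h"
  shows "\<bar>f x - poly (cfc_approx h f k) x\<bar> \<le> inverse (real (Suc k))"
  using cfc_approx[OF assms(1)] abs_le_norm_if_mem_real_spectrum[OF assms(2)] by simp

lemma cfc_LIMSEQ:
  assumes sa: "star h = h" and cont: "continuous_on UNIV f"
  shows "(\<lambda>k. peval h (of_real_poly (cfc_approx h f k))) \<longlonglongrightarrow> cfc h f"
proof -
  have "Cauchy (\<lambda>k. peval h (of_real_poly (cfc_approx h f k)))"
  proof (rule CauchyI)
    fix e :: real assume e: "0 < e"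
    obtain M :: nat where M: "2 / e < real M" using reals_Archimedean2 by blast
    have "norm (peval h (of_real_poly (cfc_approx h f m)) - peval h (of_real_poly (cfc_approx h f n))) < e"
      if "M \<le> m" "M \<le> n" for m n
    proof -
      have "norm (peval h (of_real_poly (cfc_approx h f m - cfc_approx h f n)))
          \<le> inverse (real (Suc m)) + inverse (real (Suc n))"
      proof (rule norm_peval_of_real_poly_le[OF sa])
        fix x assume x: "x \<in> real_spectrum h"
        show "\<bar>poly (cfc_approx h f m - cfc_approx h f n) x\<bar>
            \<le> inverse (real (Suc m)) + inverse (real (Suc n))"
          using cfc_approx_real_spectrum[OF cont x, of m] cfc_approx_real_spectrum[OF cont x, of n]
          by (unfold poly_diff) arith
      qed
      also have "\<dots> < e"
      proof -
        have "inverse (real (Suc m)) \<le> inverse (real (Suc M))" "inverse (real (Suc n)) \<le> inverse (real (Suc M))"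
          using that by (simp_all add: field_simps)
        moreover have "inverse (real (Suc M)) < e / 2" using M e by (simp add: field_simps)
        ultimately show ?thesis by linarith
      qed
      finally show ?thesis by (simp add: of_real_poly_diff peval_diff)
    qed
    then show "\<exists>M. \<forall>m\<ge>M. \<forall>n\<ge>M.
        norm (peval h (of_real_poly (cfc_approx h f m)) - peval h (of_real_poly (cfc_approx h f n))) < e"
      by blast
  qed
  then have "convergent (\<lambda>k. peval h (of_real_poly (cfc_approx h f k)))" by (rule Cauchy_convergent)
  then show ?thesis unfolding cfc_def by (simp add: convergent_LIMSEQ_iff)
qed

lemma norm_cfc_diff_peval_le:
  assumes sa: "star h = h" and cont: "continuous_on UNIV f"
    and bound: "\<And>x. x \<in> real_spectrum h \<Longrightarrow> \<bar>f x - poly P x\<bar> \<le> m"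
  shows "norm (cfc h f - peval h (of_real_poly P)) \<le> m"
proof (rule LIMSEQ_norm_diff_le[OF cfc_LIMSEQ[OF sa cont] LIMSEQ_inverse_Suc[of 1]])
  fix k
  have "norm (peval h (of_real_poly (cfc_approx h f k - P))) \<le> m + 1 * inverse (real (Suc k))"
  proof (rule norm_peval_of_real_poly_le[OF sa])
    fix x assume x: "x \<in> real_spectrum h"
    show "\<bar>poly (cfc_approx h f k - P) x\<bar> \<le> m + 1 * inverse (real (Suc k))"
      using bound[OF x] cfc_approx_real_spectrum[OF cont x, of k] by (unfold poly_diff) arith
  qed
  then show "norm (peval h (of_real_poly (cfc_approx h f k)) - peval h (of_real_poly P))
      \<le> m + 1 * inverse (real (Suc k))"
    by (simp add: of_real_poly_diff peval_diff)
qed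

lemma peval_LIMSEQ_cfc:
  assumes sa: "star h = h" and cont: "continuous_on UNIV f" and e: "e \<longlonglongrightarrow> 0"
    and approx: "\<And>k x. x \<in> real_spectrum h \<Longrightarrow> \<bar>f x - poly (P k) x\<bar> \<le> e k"
  shows "(\<lambda>k. peval h (of_real_poly (P k))) \<longlonglongrightarrow> cfc h f"
proof -
  have "(\<lambda>k. peval h (of_real_poly (P k)) - cfc h f) \<longlonglongrightarrow> 0"
  proof (rule Lim_null_comparison[OF _ e])
    show "\<forall>\<^sub>F k in sequentially. norm (peval h (of_real_poly (P k)) - cfc h f) \<le> e k"
      using norm_cfc_diff_peval_le[OF sa cont approx] by (simp add: norm_minus_commute)
  qed
  then show ?thesis by (simp add: Lim_null[symmetric])
qed

lemma norm_cfc_diff_le: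
  assumes sa: "star h = h" and cf: "continuous_on UNIV f" and cg: "continuous_on UNIV g"
    and bound: "\<And>x. x \<in> real_spectrum h \<Longrightarrow> \<bar>f x - g x\<bar> \<le> m"
  shows "norm (cfc h g - cfc h f) \<le> m"
proof (rule LIMSEQ_norm_diff_le[OF cfc_LIMSEQ[OF sa cg] LIMSEQ_inverse_Suc[of 1]])
  fix k
  have "norm (cfc h f - peval h (of_real_poly (cfc_approx h g k))) \<le> m + 1 * inverse (real (Suc k))"
  proof (rule norm_cfc_diff_peval_le[OF sa cf])
    fix x assume x: "x \<in> real_spectrum h"
    show "\<bar>f x - poly (cfc_approx h g k) x\<bar> \<le> m + 1 * inverse (real (Suc k))"
      using bound[OF x] cfc_approx_real_spectrum[OF cg x, of k] by arith
  qed
  then show "norm (peval h (of_real_poly (cfc_approx h g k)) - cfc h f) \<le> m + 1 * inverse (real (Suc k))"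
    by (simp add: norm_minus_commute)
qed

lemma cfc_poly:
  assumes "star h = h"
  shows "cfc h (poly P) = peval h (of_real_poly P)"
  using norm_cfc_diff_peval_le[OF assms, of "poly P" P 0] by (simp add: continuous_on_poly)

lemma cfc_id:
  assumes "star h = h"
  shows "cfc h (\<lambda>x. x) = h"
proof -
  have "(\<lambda>x::real. x) = poly [:0, 1:]" by (simp add: fun_eq_iff)
  then show ?thesis using cfc_poly[OF assms, of "[:0, 1:]"] by (simp add: peval_pCons map_poly_pCons)
qed

lemma cfc_const:
  assumes "star h = h"
  shows "cfc h (\<lambda>x. c) = scaleC (complex_of_real c) 1"
proof -
  have "(\<lambda>x::real. c) = poly [:c:]" by (simp add: fun_eq_iff)
  then show ?thesis using cfc_poly[OF assms, of "[:c:]"] by (simp add: map_poly_pCons)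
qed

lemma cfc_diff_const:
  assumes "star h = h"
  shows "cfc h (\<lambda>x. x - c) = h - scaleC (complex_of_real c) 1"
proof -
  have "(\<lambda>x::real. x - c) = poly [:- c, 1:]" by (simp add: fun_eq_iff)
  then show ?thesis using cfc_poly[OF assms, of "[:- c, 1:]"] by (simp add: map_poly_pCons peval_linear)
qed

lemma cfc_cong:
  assumes sa: "star h = h" and cf: "continuous_on UNIV f" and cg: "continuous_on UNIV g"
    and eq: "\<And>x. x \<in> real_spectrum h \<Longrightarrow> f x = g x"
  shows "cfc h f = cfc h g"
  using norm_cfc_diff_le[OF sa cf cg, of 0] eq by simp

lemma norm_cfc_le:
  assumes sa: "star h = h" and cf: "continuous_on UNIV f"
    and bound: "\<And>x. x \<in> real_spectrum h \<Longrightarrow> \<bar>f x\<bar> \<le> m"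
  shows "norm (cfc h f) \<le> m"
  using norm_cfc_diff_le[OF sa continuous_on_const cf, of 0 m] bound cfc_const[OF sa, of 0] by simp

lemma cfc_self_adjoint:
  assumes sa: "star h = h" and cont: "continuous_on UNIV f"
  shows "star (cfc h f) = cfc h f"
proof -
  have lim: "(\<lambda>k. peval h (of_real_poly (cfc_approx h f k))) \<longlonglongrightarrow> cfc h f"
    by (rule cfc_LIMSEQ[OF sa cont])
  then have "(\<lambda>k. norm (star (peval h (of_real_poly (cfc_approx h f k))) - star (cfc h f))) \<longlonglongrightarrow> 0"
    by (simp add: star_diff[symmetric] tendsto_norm_zero_iff LIM_zero_iff)
  then have "(\<lambda>k. peval h (of_real_poly (cfc_approx h f k))) \<longlonglongrightarrow> star (cfc h f)"
    by (simp add: peval_of_real_poly_self_adjoint[OF sa] tendsto_norm_zero_iff LIM_zero_iff)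
  then show ?thesis using lim by (rule LIMSEQ_unique)
qed

lemma bounded_on_real_spectrum:
  fixes f :: "real \<Rightarrow> real"
  assumes "continuous_on UNIV f"
  obtains B where "B \<ge> 0" "\<And>x. x \<in> real_spectrum h \<Longrightarrow> \<bar>f x\<bar> \<le> B"
proof -
  have "bounded (f ` {- norm h..norm h})"
    by (intro compact_imp_bounded compact_continuous_image continuous_on_subset[OF assms]) auto
  then obtain B where B: "\<forall>y\<in>f ` {- norm h..norm h}. norm y \<le> B" unfolding bounded_iff by blast
  show ?thesis
  proof (rule that[of "max 0 B"])
    fix x assume "x \<in> real_spectrum h"
    then have "x \<in> {- norm h..norm h}"
      using abs_le_norm_if_mem_real_spectrum[of x h] by (simp add: abs_le_iff)
    then show "\<bar>f x\<bar> \<le> max 0 B" using B by (simp add: le_max_iff_disj)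
  qed simp
qed

lemma cfc_add:
  assumes sa: "star h = h" and cf: "continuous_on UNIV f" and cg: "continuous_on UNIV g"
  shows "cfc h (\<lambda>x. f x + g x) = cfc h f + cfc h g"
proof (rule LIMSEQ_unique)
  define P where "P k = cfc_approx h f k + cfc_approx h g k" for k
  show "(\<lambda>k. peval h (of_real_poly (P k))) \<longlonglongrightarrow> cfc h (\<lambda>x. f x + g x)"
  proof (rule peval_LIMSEQ_cfc[OF sa _ LIMSEQ_inverse_Suc[of 2]])
    fix k x assume x: "x \<in> real_spectrum h"
    show "\<bar>f x + g x - poly (P k) x\<bar> \<le> 2 * inverse (real (Suc k))"
      using cfc_approx_real_spectrum[OF cf x, of k] cfc_approx_real_spectrum[OF cg x, of k]
      unfolding P_def by (unfold poly_add) arith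
  qed (intro continuous_intros cf cg)
  show "(\<lambda>k. peval h (of_real_poly (P k))) \<longlonglongrightarrow> cfc h f + cfc h g"
    unfolding P_def of_real_poly_add peval_add
    by (intro tendsto_add cfc_LIMSEQ[OF sa cf] cfc_LIMSEQ[OF sa cg])
qed

lemma cfc_mult:
  assumes sa: "star h = h" and cf: "continuous_on UNIV f" and cg: "continuous_on UNIV g"
  shows "cfc h (\<lambda>x. f x * g x) = cfc h f * cfc h g"
proof (rule LIMSEQ_unique)
  obtain Bf Bg where Bf: "Bf \<ge> 0" "\<And>x. x \<in> real_spectrum h \<Longrightarrow> \<bar>f x\<bar> \<le> Bf"
    and Bg: "\<And>x. x \<in> real_spectrum h \<Longrightarrow> \<bar>g x\<bar> \<le> Bg"
    using bounded_on_real_spectrum[OF cf] bounded_on_real_spectrum[OF cg] by metis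
  define B where "B = max Bf Bg"
  have B: "B \<ge> 0" "\<And>x. x \<in> real_spectrum h \<Longrightarrow> \<bar>f x\<bar> \<le> B \<and> \<bar>g x\<bar> \<le> B"
    using Bf Bg unfolding B_def by (auto simp: le_max_iff_disj)
  define P where "P k = cfc_approx h f k * cfc_approx h g k" for k
  show "(\<lambda>k. peval h (of_real_poly (P k))) \<longlonglongrightarrow> cfc h (\<lambda>x. f x * g x)"
  proof (rule peval_LIMSEQ_cfc[OF sa _ LIMSEQ_inverse_Suc[of "2 * B + 1"]])
    fix k x assume x: "x \<in> real_spectrum h"
    define d where "d = inverse (real (Suc k))"
    define p where "p = poly (cfc_approx h f k) x"
    define q where "q = poly (cfc_approx h g k) x"
    have d: "0 \<le> d" "d \<le> 1" unfolding d_def by (auto simp: field_simps)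
    have ep: "\<bar>f x - p\<bar> \<le> d" and eq: "\<bar>g x - q\<bar> \<le> d"
      unfolding p_def q_def d_def using cfc_approx_real_spectrum[OF cf x] cfc_approx_real_spectrum[OF cg x]
      by simp_all
    have "\<bar>f x * g x - p * q\<bar> = \<bar>f x * (g x - q) + (f x - p) * q\<bar>" by (simp add: algebra_simps)
    also have "\<dots> \<le> \<bar>f x\<bar> * \<bar>g x - q\<bar> + \<bar>f x - p\<bar> * \<bar>q\<bar>"
      using abs_triangle_ineq[of "f x * (g x - q)" "(f x - p) * q"] by (simp add: abs_mult)
    also have "\<dots> \<le> B * d + d * (B + 1)"
      using B(1) B(2)[OF x] ep eq d by (intro add_mono mult_mono) auto
    finally show "\<bar>f x * g x - poly (P k) x\<bar> \<le> (2 * B + 1) * inverse (real (Suc k))"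
      unfolding P_def p_def q_def d_def by (simp add: algebra_simps)
  qed (intro continuous_intros cf cg)
  show "(\<lambda>k. peval h (of_real_poly (P k))) \<longlonglongrightarrow> cfc h f * cfc h g"
    unfolding P_def of_real_poly_mult peval_mult
    by (intro tendsto_mult cfc_LIMSEQ[OF sa cf] cfc_LIMSEQ[OF sa cg])
qed

lemma cfc_commute:
  assumes "star h = h" "continuous_on UNIV f" "continuous_on UNIV g"
  shows "cfc h f * cfc h g = cfc h g * cfc h f"
  using cfc_mult[OF assms] cfc_mult[OF assms(1,3,2)] by (simp add: mult.commute)

lemma cfc_commute_self:
  assumes "star h = h" "continuous_on UNIV f"
  shows "cfc h f * h = h * cfc h f"
  using cfc_commute[OF assms continuous_on_id] cfc_id[OF assms(1)] by simp

lemma cfc_scale: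
  assumes "star h = h" "continuous_on UNIV f"
  shows "cfc h (\<lambda>x. c * f x) = scaleC (complex_of_real c) (cfc h f)"
  using cfc_mult[OF assms(1) continuous_on_const assms(2), of c] cfc_const[OF assms(1), of c]
  by (simp add: scaleC_one_mult)

lemma positive_cfc:
  assumes sa: "star h = h" and cf: "continuous_on UNIV f" and pos: "\<And>x. f x \<ge> 0"
  shows "positive_elem scaleC star (cfc h f)"
proof -
  have cs: "continuous_on UNIV (\<lambda>x. sqrt (f x))" by (intro continuous_intros cf)
  have "(\<lambda>x. sqrt (f x) * sqrt (f x)) = f" using pos by (simp add: fun_eq_iff)
  then have "cfc h f = cfc h (\<lambda>x. sqrt (f x)) * cfc h (\<lambda>x. sqrt (f x))"
    using cfc_mult[OF sa cs cs] by simp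
  then show ?thesis using positive_elem_square[OF cfc_self_adjoint[OF sa cs]] by simp
qed

lemma cfc_mem_closed:
  assumes sa: "star h = h" and cont: "continuous_on UNIV f" and f0: "f 0 = 0"
    and Y: "closed Y" and mem: "\<And>P. poly P 0 = 0 \<Longrightarrow> peval h (of_real_poly P) \<in> Y"
  shows "cfc h f \<in> Y"
proof (rule Lim_in_closed_set[OF Y _ trivial_limit_sequentially])
  define P where "P k = cfc_approx h f k - [:poly (cfc_approx h f k) 0:]" for k
  show "\<forall>\<^sub>F k in sequentially. peval h (of_real_poly (P k)) \<in> Y"
    by (simp add: P_def mem)
  show "(\<lambda>k. peval h (of_real_poly (P k))) \<longlonglongrightarrow> cfc h f"
  proof (rule peval_LIMSEQ_cfc[OF sa cont LIMSEQ_inverse_Suc[of 2]])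
    fix k x assume x: "x \<in> real_spectrum h"
    have "\<bar>f 0 - poly (cfc_approx h f k) 0\<bar> \<le> inverse (real (Suc k))"
      using cfc_approx[OF cont, of 0 h k] by simp
    moreover have "poly (P k) x = poly (cfc_approx h f k) x - poly (cfc_approx h f k) 0"
      unfolding P_def by simp
    ultimately show "\<bar>f x - poly (P k) x\<bar> \<le> 2 * inverse (real (Suc k))"
      using cfc_approx_real_spectrum[OF cont x, of k] f0 by arith
  qed
qed

end

section \<open>Tents and orthogonal families\<close>

definition tent :: "real \<Rightarrow> real \<Rightarrow> real \<Rightarrow> real" where
  "tent \<delta> s x = max 0 (1 - \<bar>x - s\<bar> / \<delta>)"

lemma continuous_on_tent: "continuous_on UNIV (tent \<delta> s)"
  unfolding tent_def divide_inverse by (intro continuous_intros)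

lemma tent_nonneg: "tent \<delta> s x \<ge> 0"
  unfolding tent_def by simp

lemma tent_center: "\<delta> > 0 \<Longrightarrow> tent \<delta> s s = 1"
  unfolding tent_def by simp

lemma tent_eq_0: "\<delta> > 0 \<Longrightarrow> \<delta> \<le> \<bar>x - s\<bar> \<Longrightarrow> tent \<delta> s x = 0"
  unfolding tent_def by (simp add: field_simps)

lemma tent_mult_tent_eq_0:
  assumes "\<delta> > 0" "2 * \<delta> \<le> \<bar>s - s'\<bar>"
  shows "tent \<delta> s x * tent \<delta> s' x = 0"
proof -
  have "\<delta> \<le> \<bar>x - s\<bar> \<or> \<delta> \<le> \<bar>x - s'\<bar>" using assms by linarith
  then show ?thesis using tent_eq_0[OF assms(1)] by auto
qed

lemma finite_set_separated:
  fixes S :: "real set"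
  assumes "finite S" "z \<notin> S"
  obtains \<delta> where "\<delta> > 0" "\<And>s. s \<in> S \<Longrightarrow> \<delta> \<le> \<bar>s - z\<bar>"
    "\<And>s s'. s \<in> S \<Longrightarrow> s' \<in> S \<Longrightarrow> s \<noteq> s' \<Longrightarrow> 2 * \<delta> \<le> \<bar>s - s'\<bar>"
proof -
  define T where "T = insert 1 ((\<lambda>s. \<bar>s - z\<bar>) ` S \<union> (\<lambda>(s, s'). \<bar>s - s'\<bar> / 2) ` (S \<times> S - Id))"
  have "finite T" unfolding T_def using assms(1) by simp
  have pos: "t > 0" if "t \<in> T" for t using that assms(2) unfolding T_def by (auto simp: Id_def)
  show ?thesis
  proof (rule that[of "Min T"])
    show "Min T > 0" using \<open>finite T\<close> pos by (simp add: T_def)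
    show "Min T \<le> \<bar>s - z\<bar>" if "s \<in> S" for s
      using \<open>finite T\<close> that unfolding T_def by (intro Min_le) auto
    show "2 * Min T \<le> \<bar>s - s'\<bar>" if "s \<in> S" "s' \<in> S" "s \<noteq> s'" for s s'
    proof -
      have "\<bar>s - s'\<bar> / 2 \<in> T" using that unfolding T_def by (auto intro!: image_eqI[where x="(s, s')"])
      then show ?thesis using Min_le[OF \<open>finite T\<close>] by fastforce
    qed
  qed
qed

context unital_cstar_algebra
begin

text \<open>If \<open>f(l) \<noteq> 0\<close> then \<open>u = f\<^sup>2 + (x - l)\<^sup>2\<close> has no zeros, and \<open>f(h) = 0\<close> would make
  \<open>u(h) = (h - l)\<^sup>2\<close> invertible with inverse \<open>(1/u)(h)\<close>.\<close>
lemma cfc_nonzero: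
  assumes sa: "star h = h" and cont: "continuous_on UNIV f"
    and l: "l \<in> real_spectrum h" and fl: "f l \<noteq> 0"
  shows "cfc h f \<noteq> 0"
proof
  assume f0: "cfc h f = 0"
  define u where "u x = f x * f x + (x - l) * (x - l)" for x
  have "u x \<noteq> 0" for x
    using fl by (cases "x = l") (auto simp: u_def add_nonneg_eq_0_iff)
  then have cu: "continuous_on UNIV u" and cv: "continuous_on UNIV (\<lambda>x. 1 / u x)"
    unfolding u_def by (auto intro!: continuous_intros cont)
  define g where "g = cfc h (\<lambda>x. 1 / u x)"
  define d where "d = h - scaleC (complex_of_real l) 1"
  have "cfc h u = d * d"
    unfolding u_def d_def using f0 cfc_diff_const[OF sa, of l]
    by (simp add: cfc_add[OF sa] cfc_mult[OF sa] cont continuous_intros)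
  then have inv: "g * (d * d) = 1"
    using cfc_mult[OF sa cv cu] cfc_const[OF sa, of 1] \<open>\<And>x. u x \<noteq> 0\<close> unfolding g_def by simp
  have "g * h = h * g" unfolding g_def by (rule cfc_commute_self[OF sa cv])
  then have comm: "d * g = g * d"
    unfolding d_def by (simp add: algebra_simps scaleC_one_mult mult_scaleC_one)
  have "d * (d * g) = 1" using inv by (simp add: comm flip: mult.assoc)
  moreover have "d * g * d = 1" using inv by (simp add: comm mult.assoc)
  ultimately have "invertible_elem d" by (rule invertible_elemI)
  then show False using l unfolding d_def real_spectrum_def mem_spectrum_iff by simp
qed

lemma positive_elem_scaleR:
  assumes p: "positive_elem scaleC star c" and t: "t > 0"
  shows "positive_elem scaleC star (scaleC (complex_of_real t) c)"
  unfolding positive_elem_def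
proof
  show "star (scaleC (complex_of_real t) c) = scaleC (complex_of_real t) c"
    using p by (simp add: star_scaleR positive_elem_def)
  show "\<forall>l\<in>spectrum (scaleC (complex_of_real t) c). Im l = 0 \<and> 0 \<le> Re l"
  proof
    fix l assume "l \<in> spectrum (scaleC (complex_of_real t) c)"
    then have "l / complex_of_real t \<in> spectrum c" using mem_spectrum_scaleC[of "complex_of_real t"] t by simp
    then have "Im (l / complex_of_real t) = 0 \<and> 0 \<le> Re (l / complex_of_real t)"
      using p unfolding positive_elem_def by blast
    then show "Im l = 0 \<and> 0 \<le> Re l" using t by (simp add: Im_divide_of_real Re_divide_of_real field_simps)
  qed
qed

lemma positive_elem_projection: "projection_elem star q \<Longrightarrow> positive_elem scaleC star q"
  using positive_elem_square[of q] unfolding projection_elem_def by simp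

lemma cfc_in_corner:
  assumes sa: "star h = h" and qh: "q * h = h" "h * q = h"
    and cont: "continuous_on UNIV f" and f0: "f 0 = 0"
  shows "q * cfc h f = cfc h f" "cfc h f * q = cfc h f"
proof -
  have "closed {y. q * y = y \<and> y * q = y}"
    by (simp only: Collect_conj_eq) (intro closed_Int closed_Collect_eq continuous_intros)
  moreover have "q * peval h P = peval h P \<and> peval h P * q = peval h P" if "coeff P 0 = 0" for P
  proof -
    have "q * scaleC (coeff P i) (h ^ i) = scaleC (coeff P i) (h ^ i) \<and>
        scaleC (coeff P i) (h ^ i) * q = scaleC (coeff P i) (h ^ i)" for i
    proof (cases i)
      case (Suc j)
      have "q * h ^ i = h ^ i" unfolding Suc by (simp add: mult.assoc[symmetric] qh)
      moreover have "h ^ i * q = h ^ i" unfolding Suc by (simp only: power_Suc2 mult.assoc qh)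
      ultimately show ?thesis by (simp add: scaleC_mult_right[symmetric] scaleC_mult_left[symmetric])
    qed (simp add: that)
    then show ?thesis unfolding peval_def by (simp add: sum_distrib_left sum_distrib_right)
  qed
  ultimately have "cfc h f \<in> {y. q * y = y \<and> y * q = y}"
    by (intro cfc_mem_closed[OF sa cont f0]) (auto simp: poly_0_coeff_0 coeff_map_poly)
  then show "q * cfc h f = cfc h f" "cfc h f * q = cfc h f" by auto
qed

definition orthogonal_family :: "'a \<Rightarrow> 'a set \<Rightarrow> bool" where
  "orthogonal_family p C \<longleftrightarrow> finite C
     \<and> (\<forall>c\<in>C. positive_elem scaleC star c \<and> c \<noteq> 0 \<and> p * c = c \<and> c * p = c)
     \<and> (\<forall>c\<in>C. \<forall>d\<in>C. c \<noteq> d \<longrightarrow> c * d = 0)"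

definition projection_family :: "'a \<Rightarrow> 'a set \<Rightarrow> bool" where
  "projection_family p Q \<longleftrightarrow> finite Q
     \<and> (\<forall>q\<in>Q. projection_elem star q \<and> q \<noteq> 0 \<and> p * q = q \<and> q * p = q)
     \<and> (\<forall>q\<in>Q. \<forall>q'\<in>Q. q \<noteq> q' \<longrightarrow> q * q' = 0)"

lemma projection_family_imp_orthogonal_family:
  "projection_family p Q \<Longrightarrow> orthogonal_family p Q"
  unfolding projection_family_def orthogonal_family_def using positive_elem_projection by blast

lemma inj_on_orthogonal:
  assumes "\<And>s. s \<in> S \<Longrightarrow> star (c s) = c s \<and> c s \<noteq> 0"
    and "\<And>s s'. s \<in> S \<Longrightarrow> s' \<in> S \<Longrightarrow> s \<noteq> s' \<Longrightarrow> c s * c s' = 0"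
  shows "inj_on c S"
proof (rule inj_onI, rule ccontr)
  fix s s' assume "s \<in> S" "s' \<in> S" "c s = c s'" "s \<noteq> s'"
  then have "c s * c s = 0" using assms(2)[of s s'] by simp
  then show False using assms(1)[OF \<open>s \<in> S\<close>] norm_square_self_adjoint[of "c s"] by simp
qed

lemma orthogonal_family_tents:
  assumes sa: "star h = h" and S: "finite S" "S \<subseteq> real_spectrum h" and \<delta>: "\<delta> > 0"
    and sep: "\<And>s s'. s \<in> S \<Longrightarrow> s' \<in> S \<Longrightarrow> s \<noteq> s' \<Longrightarrow> 2 * \<delta> \<le> \<bar>s - s'\<bar>"
  shows "orthogonal_family 1 ((\<lambda>s. cfc h (tent \<delta> s)) ` S)"
    and "card ((\<lambda>s. cfc h (tent \<delta> s)) ` S) = card S"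
proof -
  have nonzero: "cfc h (tent \<delta> s) \<noteq> 0" if "s \<in> S" for s
    using that S \<delta> by (intro cfc_nonzero[OF sa continuous_on_tent]) (auto simp: tent_center)
  have orth: "cfc h (tent \<delta> s) * cfc h (tent \<delta> s') = 0" if "s \<in> S" "s' \<in> S" "s \<noteq> s'" for s s'
    using cfc_mult[OF sa continuous_on_tent continuous_on_tent, of \<delta> s \<delta> s', symmetric]
      tent_mult_tent_eq_0[OF \<delta> sep[OF that]] cfc_const[OF sa, of 0]
    by simp
  show "orthogonal_family 1 ((\<lambda>s. cfc h (tent \<delta> s)) ` S)"
    unfolding orthogonal_family_def
    using S nonzero orth positive_cfc[OF sa continuous_on_tent tent_nonneg] by auto
  have "inj_on (\<lambda>s. cfc h (tent \<delta> s)) S"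
    using nonzero orth cfc_self_adjoint[OF sa continuous_on_tent] by (intro inj_on_orthogonal) auto
  then show "card ((\<lambda>s. cfc h (tent \<delta> s)) ` S) = card S" by (rule card_image)
qed

lemma orthogonal_family_infinite_spectrum:
  assumes sa: "star h = h" and ph: "p * h = h" "h * p = h" and inf: "infinite (real_spectrum h)"
  obtains C where "orthogonal_family p C" "card C = n"
proof -
  obtain S where S: "finite S" "card S = n" "S \<subseteq> real_spectrum h - {0}"
    using infinite_arbitrarily_large[of "real_spectrum h - {0}" n] inf by auto
  obtain \<delta> where \<delta>: "\<delta> > 0" and zero: "\<And>s. s \<in> S \<Longrightarrow> \<delta> \<le> \<bar>s - 0\<bar>"
    and sep: "\<And>s s'. s \<in> S \<Longrightarrow> s' \<in> S \<Longrightarrow> s \<noteq> s' \<Longrightarrow> 2 * \<delta> \<le> \<bar>s - s'\<bar>"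
    using finite_set_separated[OF S(1), of 0] S(3) by blast
  define C where "C = (\<lambda>s. cfc h (tent \<delta> s)) ` S"
  have "orthogonal_family 1 C" "card C = n"
    using orthogonal_family_tents[OF sa S(1) _ \<delta> sep] S unfolding C_def by auto
  moreover have "p * c = c \<and> c * p = c" if "c \<in> C" for c
    using that zero \<delta> cfc_in_corner[OF sa ph continuous_on_tent]
    unfolding C_def by (auto simp: tent_eq_0 abs_minus_commute)
  ultimately show ?thesis using that[of C] unfolding orthogonal_family_def by auto
qed

section \<open>Maximal families of projections and minimal corners\<close>

lemma projection_family_subset:
  "projection_family p Q \<Longrightarrow> Q' \<subseteq> Q \<Longrightarrow> projection_family p Q'"
  unfolding projection_family_def by (meson finite_subset subsetD)

lemma projection_family_insert:
  assumes Q: "projection_family p Q" and e: "projection_elem star e" "e \<noteq> 0" "p * e = e" "e * p = e"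
    and orth: "\<And>q. q \<in> Q \<Longrightarrow> e * q = 0"
  shows "projection_family p (insert e Q)" "e \<notin> Q"
proof -
  have "q * e = star (e * q)" if "q \<in> Q" for q
    using e(1) Q that unfolding projection_elem_def projection_family_def by (simp add: star_mult)
  then have "q * e = 0" if "q \<in> Q" for q using orth that by simp
  then show "projection_family p (insert e Q)"
    using Q e orth unfolding projection_family_def by auto
  show "e \<notin> Q"
  proof
    assume "e \<in> Q"
    then have "e * e = 0" by (rule orth)
    then show False using e(1,2) unfolding projection_elem_def by simp
  qed
qed

lemma sum_maximal_projection_family:
  assumes p: "projection_elem star p" and Q: "projection_family p Q"
    and max: "\<And>Q'. projection_family p Q' \<Longrightarrow> card Q' \<le> card Q"
  shows "(\<Sum>q\<in>Q. q) = p"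
proof (rule ccontr)
  define s where "s = (\<Sum>q\<in>Q. q)"
  assume "(\<Sum>q\<in>Q. q) \<noteq> p"
  then have e0: "p - s \<noteq> 0" unfolding s_def by simp
  have fin: "finite Q" and mem: "\<And>q. q \<in> Q \<Longrightarrow> projection_elem star q \<and> p * q = q \<and> q * p = q"
    and orth: "\<And>q q'. q \<in> Q \<Longrightarrow> q' \<in> Q \<Longrightarrow> q \<noteq> q' \<Longrightarrow> q * q' = 0"
    using Q unfolding projection_family_def by auto
  have pp: "star p = p" "p * p = p" using p unfolding projection_elem_def by auto
  have sq: "s * q = q" if "q \<in> Q" for q
  proof -
    have "s * q = q * q + (\<Sum>q'\<in>Q - {q}. q' * q)"
      unfolding s_def sum_distrib_right using sum.remove[OF fin that] by simp
    also have "(\<Sum>q'\<in>Q - {q}. q' * q) = 0" using orth that by (intro sum.neutral) auto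
    finally show ?thesis using mem[OF that] unfolding projection_elem_def by simp
  qed
  have qs: "q * s = q" if "q \<in> Q" for q
  proof -
    have "q * s = q * q + (\<Sum>q'\<in>Q - {q}. q * q')"
      unfolding s_def sum_distrib_left using sum.remove[OF fin that] by simp
    also have "(\<Sum>q'\<in>Q - {q}. q * q') = 0" using orth that by (intro sum.neutral) auto
    finally show ?thesis using mem[OF that] unfolding projection_elem_def by simp
  qed
  have "s * s = (\<Sum>q\<in>Q. s * q)" by (simp only: s_def sum_distrib_left)
  also have "\<dots> = (\<Sum>q\<in>Q. q)" using sq by (intro sum.cong) auto
  finally have ss: "s * s = s" unfolding s_def .
  have ps: "p * s = s" "s * p = s" unfolding s_def by (simp_all add: sum_distrib_left sum_distrib_right mem)
  have "star s = s" unfolding s_def using mem by (simp add: star_sum projection_elem_def)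
  then have "projection_elem star (p - s)"
    unfolding projection_elem_def using pp ps ss by (simp add: star_diff algebra_simps)
  moreover have "(p - s) * q = 0" if "q \<in> Q" for q
    using that mem sq by (simp add: algebra_simps)
  ultimately have "projection_family p (insert (p - s) Q)" "p - s \<notin> Q"
    using projection_family_insert[OF Q _ e0] pp ps by (simp_all add: algebra_simps)
  then show False using max[of "insert (p - s) Q"] fin by simp
qed

lemma minimal_in_maximal_projection_family:
  assumes Q: "projection_family p Q" and max: "\<And>Q'. projection_family p Q' \<Longrightarrow> card Q' \<le> card Q"
    and qQ: "q \<in> Q" and e: "projection_elem star e" "q * e = e" "e * q = e"
  shows "e = 0 \<or> e = q"
proof (rule ccontr)
  assume "\<not> (e = 0 \<or> e = q)"
  then have e0: "e \<noteq> 0" and f0: "q - e \<noteq> 0" by auto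
  have fin: "finite Q" and q: "projection_elem star q" "p * q = q" "q * p = q"
    and orth: "\<And>r. r \<in> Q - {q} \<Longrightarrow> q * r = 0 \<and> r * q = 0"
    using Q qQ unfolding projection_family_def by auto
  have ee: "star e = e" "e * e = e" and qq: "star q = q" "q * q = q"
    using e(1) q(1) unfolding projection_elem_def by auto
  have pe: "p * e = e" "e * p = e"
    using q e by (metis mult.assoc)+
  have fproj: "projection_elem star (q - e)"
    unfolding projection_elem_def using ee qq e by (simp add: star_diff algebra_simps)
  have er: "e * r = 0" if "r \<in> Q - {q}" for r
    using orth[OF that] e(3) by (metis mult.assoc mult_zero_right)
  have R: "projection_family p (Q - {q})" using Q by (rule projection_family_subset) blast
  have "(q - e) * r = 0" if "r \<in> Q - {q}" for r
    using orth[OF that] er[OF that] by (simp add: algebra_simps)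
  moreover have "p * (q - e) = q - e" "(q - e) * p = q - e"
    using q pe by (simp_all add: algebra_simps)
  ultimately have R1: "projection_family p (insert (q - e) (Q - {q}))" "q - e \<notin> Q - {q}"
    using projection_family_insert[OF R fproj f0] by auto
  have "e * r = 0" if "r \<in> insert (q - e) (Q - {q})" for r
    using that er ee e by (auto simp: algebra_simps)
  then have R2: "projection_family p (insert e (insert (q - e) (Q - {q})))"
    "e \<notin> insert (q - e) (Q - {q})"
    using projection_family_insert[OF R1(1) e(1) e0 pe] by auto
  have "Suc (card (Q - {q})) = card Q" using fin qQ by (rule card_Suc_Diff1)
  then have "card (insert e (insert (q - e) (Q - {q}))) = Suc (card Q)"
    using R1(2) R2(2) fin by simp
  then show False using max[OF R2(1)] by simp
qed

lemma minimal_projection_corner_self_adjoint: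
  assumes q: "projection_elem star q" "q \<noteq> 0"
    and min: "\<And>e. projection_elem star e \<Longrightarrow> q * e = e \<Longrightarrow> e * q = e \<Longrightarrow> e = 0 \<or> e = q"
    and fin: "finite (real_spectrum h)" and sa: "star h = h" and qh: "q * h = h" "h * q = h"
  obtains t where "h = scaleC (complex_of_real t) q"
proof (cases "real_spectrum h \<subseteq> {0}")
  case True
  have "h = cfc h (\<lambda>x. 0)"
    using True cfc_cong[OF sa continuous_on_id continuous_on_const] cfc_id[OF sa] by auto
  then show ?thesis using that[of 0] cfc_const[OF sa, of 0] by simp
next
  case False
  define F where "F = real_spectrum h - {0}"
  then obtain l where l: "l \<in> F" using False by auto
  obtain \<delta> where \<delta>: "\<delta> > 0" and zero: "\<And>s. s \<in> F \<Longrightarrow> \<delta> \<le> \<bar>s - 0\<bar>"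
    and sep: "\<And>s s'. s \<in> F \<Longrightarrow> s' \<in> F \<Longrightarrow> s \<noteq> s' \<Longrightarrow> 2 * \<delta> \<le> \<bar>s - s'\<bar>"
    using finite_set_separated[of F 0] fin unfolding F_def by auto
  have tent_on_spectrum: "tent \<delta> s x = (if x = s then 1 else 0)" if "s \<in> F" "x \<in> real_spectrum h" for s x
    using that zero[of s] sep[of s x] \<delta>
    by (cases "x = 0") (auto simp: F_def tent_center tent_eq_0 abs_minus_commute)
  have eq_q: "cfc h (tent \<delta> s) = q" if s: "s \<in> F" for s
  proof -
    have "cfc h (tent \<delta> s) * cfc h (tent \<delta> s) = cfc h (tent \<delta> s)"
      unfolding cfc_mult[OF sa continuous_on_tent continuous_on_tent, symmetric]
      by (rule cfc_cong[OF sa]) (auto intro: continuous_intros continuous_on_tent simp: tent_on_spectrum[OF s])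
    then have "projection_elem star (cfc h (tent \<delta> s))"
      unfolding projection_elem_def using cfc_self_adjoint[OF sa continuous_on_tent] by simp
    moreover have "cfc h (tent \<delta> s) \<noteq> 0"
      using s \<delta> by (intro cfc_nonzero[OF sa continuous_on_tent]) (auto simp: F_def tent_center)
    moreover have "tent \<delta> s 0 = 0" using zero[OF s] \<delta> tent_eq_0[of \<delta> 0 s] by simp
    ultimately show ?thesis using min cfc_in_corner[OF sa qh continuous_on_tent] by blast
  qed
  have "x = 0 \<or> x = l" if "x \<in> real_spectrum h" for x
  proof (rule ccontr)
    assume "\<not> (x = 0 \<or> x = l)"
    then have "x \<in> F" "x \<noteq> l" using that by (auto simp: F_def)
    then have "q * q = 0"
      using orthogonal_family_tents[OF sa _ _ \<delta> sep, of "{x, l}"] l eq_q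
      unfolding orthogonal_family_def by (auto simp: F_def)
    then show False using q unfolding projection_elem_def by simp
  qed
  then have "cfc h (\<lambda>x. x) = cfc h (\<lambda>x. l * tent \<delta> l x)"
    using l tent_on_spectrum[OF l]
    by (intro cfc_cong[OF sa continuous_on_id continuous_on_mult[OF continuous_on_const continuous_on_tent]])
      (auto simp: F_def)
  then have "h = cfc h (\<lambda>x. l * tent \<delta> l x)" using cfc_id[OF sa] by simp
  also have "\<dots> = scaleC (complex_of_real l) q"
    using cfc_scale[OF sa continuous_on_tent] eq_q[OF l] by simp
  finally show ?thesis by (rule that)
qed

lemma minimal_projection_corner:
  assumes q: "projection_elem star q" "q \<noteq> 0"
    and min: "\<And>e. projection_elem star e \<Longrightarrow> q * e = e \<Longrightarrow> e * q = e \<Longrightarrow> e = 0 \<or> e = q"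
    and fin: "\<And>h. star h = h \<Longrightarrow> q * h = h \<Longrightarrow> h * q = h \<Longrightarrow> finite (real_spectrum h)"
    and x: "q * x = x" "x * q = x"
  shows "\<exists>c. x = scaleC c q"
proof -
  have "star q = q" using q unfolding projection_elem_def by blast
  then have sx: "q * star x = star x" "star x * q = star x"
    using x by (metis star_mult)+
  define u where "u = scaleC (1/2) (x + star x)"
  define v where "v = scaleC (- \<i> / 2) (x - star x)"
  have "star u = u" unfolding u_def by (simp add: star_scaleC star_add star_star add.commute)
  moreover have "q * u = u" "u * q = u" unfolding u_def
    by (simp_all add: scaleC_mult_right[symmetric] scaleC_mult_left[symmetric] algebra_simps x sx)
  ultimately obtain a where a: "u = scaleC (complex_of_real a) q"
    using minimal_projection_corner_self_adjoint[OF q min fin] by metis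
  have "star v = v"
    unfolding v_def by (simp add: star_scaleC star_diff star_star scaleC_diff_right scaleC_minus_left)
  moreover have "q * v = v" "v * q = v" unfolding v_def
    by (simp_all add: scaleC_mult_right[symmetric] scaleC_mult_left[symmetric] algebra_simps x sx)
  ultimately obtain b where b: "v = scaleC (complex_of_real b) q"
    using minimal_projection_corner_self_adjoint[OF q min fin] by metis
  have "x = u + scaleC \<i> v"
    unfolding u_def v_def
    by (simp add: scaleC_scaleC scaleC_add_right scaleC_diff_right scaleC_add_left[symmetric])
  also have "\<dots> = scaleC (complex_of_real a + \<i> * complex_of_real b) q"
    unfolding a b by (simp add: scaleC_scaleC scaleC_add_left)
  finally show ?thesis by blast
qed

text \<open>If \<open>qAq\<close> and \<open>q'Aq'\<close> are spanned by \<open>q\<close> and \<open>q'\<close>, then \<open>qAq'\<close> is spanned by any nonzero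
  \<open>y\<close> in it: \<open>y\<^sup>*y\<close> is a nonzero multiple of \<open>q'\<close> and \<open>z y\<^sup>*\<close> a multiple of \<open>q\<close>.\<close>
lemma corner_between_one_dimensional:
  assumes q: "projection_elem star q" and q': "projection_elem star q'"
    and cq: "\<And>x. q * x = x \<Longrightarrow> x * q = x \<Longrightarrow> \<exists>c. x = scaleC c q"
    and cq': "\<And>x. q' * x = x \<Longrightarrow> x * q' = x \<Longrightarrow> \<exists>c. x = scaleC c q'"
  shows "\<exists>y. q * y = y \<and> y * q' = y \<and> (\<forall>z. q * z = z \<and> z * q' = z \<longrightarrow> (\<exists>c. z = scaleC c y))"
proof (cases "\<exists>y. q * y = y \<and> y * q' = y \<and> y \<noteq> 0")
  case False
  then show ?thesis by (intro exI[of _ 0]) auto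
next
  case True
  then obtain y where y: "q * y = y" "y * q' = y" "y \<noteq> 0" by blast
  have "star q = q" "star q' = q'" using q q' unfolding projection_elem_def by auto
  then have sy: "q' * star y = star y" "star y * q = star y"
    using y by (metis star_mult)+
  have "q' * (star y * y) = star y * y" "(star y * y) * q' = star y * y"
    using sy y by (simp_all add: mult.assoc[symmetric]) (simp add: mult.assoc)
  then obtain c where c: "star y * y = scaleC c q'" using cq' by blast
  have "c \<noteq> 0"
  proof
    assume "c = 0"
    then have "norm y ^ 2 = 0" using c cstar_identity[of y] by simp
    then show False using y(3) by simp
  qed
  have "\<exists>c. z = scaleC c y" if z: "q * z = z" "z * q' = z" for z
  proof -
    have "q * (z * star y) = z * star y" "(z * star y) * q = z * star y"
      using z sy by (simp_all add: mult.assoc[symmetric]) (simp add: mult.assoc)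
    then obtain d where d: "z * star y = scaleC d q" using cq by blast
    have "z = z * scaleC (inverse c) (star y * y)" using z c \<open>c \<noteq> 0\<close> by (simp add: scaleC_scaleC)
    also have "\<dots> = scaleC (inverse c) ((z * star y) * y)" by (simp add: scaleC_mult_right mult.assoc)
    also have "\<dots> = scaleC (inverse c * d) y"
      unfolding d by (simp add: scaleC_mult_left[symmetric] scaleC_scaleC y)
    finally show ?thesis by blast
  qed
  then show ?thesis using y by blast
qed

lemma cspan_fin_sum:
  assumes "finite I" "\<And>i. i \<in> I \<Longrightarrow> f i \<in> cspan_fin scaleC T"
  shows "sum f I \<in> cspan_fin scaleC T"
  using assms
proof (induction I rule: finite_induct)
  case empty
  show ?case unfolding cspan_fin_def by (auto intro!: exI[of _ "\<lambda>_. 0"])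
next
  case (insert i I)
  obtain a b where "f i = (\<Sum>s\<in>T. scaleC (a s) s)" "sum f I = (\<Sum>s\<in>T. scaleC (b s) s)"
    using insert unfolding cspan_fin_def by blast
  then have "sum f (insert i I) = (\<Sum>s\<in>T. scaleC (a s + b s) s)"
    using insert by (simp add: scaleC_add_left sum.distrib)
  then show ?case unfolding cspan_fin_def by (intro CollectI exI[of _ "\<lambda>s. a s + b s"]) simp
qed

lemma scaleC_mem_cspan_fin:
  assumes "finite T" "t \<in> T"
  shows "scaleC c t \<in> cspan_fin scaleC T"
proof -
  have "(\<Sum>s\<in>T. scaleC (if s = t then c else 0) s) = scaleC c t"
    using assms by (simp add: if_distrib[of "\<lambda>a. scaleC a _"] sum.delta cong: if_cong)
  then show ?thesis unfolding cspan_fin_def by (intro CollectI exI[of _ "\<lambda>s. if s = t then c else 0"]) simp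
qed

text \<open>Since \<open>p\<close> is the sum of the \<open>q \<in> Q\<close>, the corner \<open>pAp\<close> is the sum of the subspaces \<open>qAq'\<close>.\<close>
lemma corner_not_infinite_dim:
  assumes p: "projection_elem star p" and Q: "finite Q" "(\<Sum>q\<in>Q. q) = p"
    and pq: "\<And>q. q \<in> Q \<Longrightarrow> p * q = q \<and> q * p = q \<and> q * q = q"
    and span: "\<And>q q'. q \<in> Q \<Longrightarrow> q' \<in> Q \<Longrightarrow>
      \<exists>y. q * y = y \<and> y * q' = y \<and> (\<forall>z. q * z = z \<and> z * q' = z \<longrightarrow> (\<exists>c. z = scaleC c y))"
  shows "\<not> cinfinite_dim scaleC (corner p)"
proof -
  define Y where "Y q q' = (SOME y. q * y = y \<and> y * q' = y
      \<and> (\<forall>z. q * z = z \<and> z * q' = z \<longrightarrow> (\<exists>c. z = scaleC c y)))" for q q'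
  have Y: "q * Y q q' = Y q q' \<and> Y q q' * q' = Y q q'
      \<and> (\<forall>z. q * z = z \<and> z * q' = z \<longrightarrow> (\<exists>c. z = scaleC c (Y q q')))" if "q \<in> Q" "q' \<in> Q" for q q'
    unfolding Y_def by (rule someI_ex[OF span[OF that]])
  define T where "T = (\<lambda>(q, q'). Y q q') ` (Q \<times> Q)"
  have "finite T" unfolding T_def using Q(1) by simp
  have pp: "p * p = p" using p unfolding projection_elem_def by simp
  have "T \<subseteq> corner p"
  proof
    fix y assume "y \<in> T"
    then obtain q q' where qq': "q \<in> Q" "q' \<in> Q" and y: "y = Y q q'" unfolding T_def by auto
    then have "q * y = y" "y * q' = y" using Y by simp_all
    then have "p * y = (p * q) * y" "y * p = y * (q' * p)"
      by (simp add: mult.assoc, simp add: mult.assoc[symmetric])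
    then have "p * y * p = y" using pq[OF qq'(1)] pq[OF qq'(2)] \<open>q * y = y\<close> \<open>y * q' = y\<close> by simp
    then show "y \<in> corner p" unfolding corner_def by (intro CollectI exI[of _ y]) simp
  qed
  moreover have "corner p \<subseteq> cspan_fin scaleC T"
  proof
    fix x assume "x \<in> corner p"
    then obtain x0 where x0: "x = p * x0 * p" unfolding corner_def by blast
    have "x = p * x * p" unfolding x0 using pp by (simp add: mult.assoc[symmetric]) (simp add: mult.assoc)
    also have "\<dots> = (\<Sum>q\<in>Q. q * x) * (\<Sum>q'\<in>Q. q')"
      unfolding Q(2)[symmetric] by (simp add: sum_distrib_right)
    also have "\<dots> = (\<Sum>q\<in>Q. q * x * (\<Sum>q'\<in>Q. q'))" by (rule sum_distrib_right)
    also have "\<dots> = (\<Sum>q\<in>Q. \<Sum>q'\<in>Q. q * x * q')" by (simp only: sum_distrib_left)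
    also have "\<dots> \<in> cspan_fin scaleC T"
    proof (intro cspan_fin_sum Q(1))
      fix q q' assume qq': "q \<in> Q" "q' \<in> Q"
      have "q * (q * x * q') = q * x * q'" "(q * x * q') * q' = q * x * q'"
        using pq[OF qq'(1)] pq[OF qq'(2)] by (simp_all add: mult.assoc[symmetric]) (simp add: mult.assoc)
      then obtain c where "q * x * q' = scaleC c (Y q q')" using Y[OF qq'] by blast
      moreover have "Y q q' \<in> T" unfolding T_def using qq' by force
      ultimately show "q * x * q' \<in> cspan_fin scaleC T" using scaleC_mem_cspan_fin[OF \<open>finite T\<close>] by simp
    qed
    finally show "x \<in> cspan_fin scaleC T" .
  qed
  ultimately show ?thesis using \<open>finite T\<close> unfolding cinfinite_dim_def by blast
qed

lemma orthogonal_family_in_infinite_corner: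
  assumes p: "projection_elem star p" and inf: "cinfinite_dim scaleC (corner p)"
  shows "\<exists>C. orthogonal_family p C \<and> n \<le> card C"
proof (rule ccontr)
  assume none: "\<nexists>C. orthogonal_family p C \<and> n \<le> card C"
  have fin: "finite (real_spectrum h)" if "star h = h" "p * h = h" "h * p = h" for h
    using orthogonal_family_infinite_spectrum[OF that, of n] none by auto
  have "card Q < n" if "projection_family p Q" for Q
    using none projection_family_imp_orthogonal_family[OF that] by (meson not_le)
  then obtain Q where Q: "projection_family p Q"
    and max: "\<And>Q'. projection_family p Q' \<Longrightarrow> card Q' \<le> card Q"
    using ex_has_greatest_nat[of "projection_family p" "{}" card n]
    by (auto simp: projection_family_def)
  have mem: "projection_elem star q \<and> q \<noteq> 0 \<and> p * q = q \<and> q * p = q" if "q \<in> Q" for q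
    using Q that unfolding projection_family_def by blast
  have one_dim: "\<exists>c. x = scaleC c q" if "q \<in> Q" "q * x = x" "x * q = x" for q x
  proof (rule minimal_projection_corner)
    show "projection_elem star q" "q \<noteq> 0" using mem[OF that(1)] by auto
    show "e = 0 \<or> e = q" if "projection_elem star e" "q * e = e" "e * q = e" for e
      using minimal_in_maximal_projection_family[OF Q max \<open>q \<in> Q\<close> that] .
    show "finite (real_spectrum h)" if "star h = h" "q * h = h" "h * q = h" for h
      using fin[OF that(1)] that mem[OF \<open>q \<in> Q\<close>] by (metis mult.assoc)
  qed (use that in auto)
  have "\<not> cinfinite_dim scaleC (corner p)"
  proof (rule corner_not_infinite_dim[OF p])
    show "finite Q" using Q unfolding projection_family_def by blast
    show "(\<Sum>q\<in>Q. q) = p" by (rule sum_maximal_projection_family[OF p Q max])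
    show "p * q = q \<and> q * p = q \<and> q * q = q" if "q \<in> Q" for q
      using mem[OF that] unfolding projection_elem_def by blast
    show "\<exists>y. q * y = y \<and> y * q' = y \<and> (\<forall>z. q * z = z \<and> z * q' = z \<longrightarrow> (\<exists>c. z = scaleC c y))"
      if "q \<in> Q" "q' \<in> Q" for q q'
      using mem that one_dim by (intro corner_between_one_dimensional) auto
  qed
  then show False using inf by contradiction
qed

lemma orthogonal_family_above:
  assumes sa: "star b = b" and a: "a > 0"
    and S: "finite S" "S \<subseteq> real_spectrum b" "\<And>s. s \<in> S \<Longrightarrow> a < s"
  obtains C where "orthogonal_family 1 C" "card C = card S"
    "\<And>c. c \<in> C \<Longrightarrow> b * c = c * b \<and> a * norm c \<le> norm (b * c)"
proof -
  have "a \<notin> S" using S(3) by blast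
  then obtain \<delta> where \<delta>: "\<delta> > 0" and below: "\<And>s. s \<in> S \<Longrightarrow> \<delta> \<le> \<bar>s - a\<bar>"
    and sep: "\<And>s s'. s \<in> S \<Longrightarrow> s' \<in> S \<Longrightarrow> s \<noteq> s' \<Longrightarrow> 2 * \<delta> \<le> \<bar>s - s'\<bar>"
    using finite_set_separated[OF S(1)] by blast
  define g where "g x = 1 / max x a" for x
  have cg: "continuous_on UNIV g" unfolding g_def using a by (intro continuous_intros) (auto simp: max_def)
  have norm_g: "norm (cfc b g) \<le> 1 / a"
    using a by (intro norm_cfc_le[OF sa cg]) (simp add: g_def frac_le)
  have key: "a * norm (cfc b (tent \<delta> s)) \<le> norm (b * cfc b (tent \<delta> s))" if s: "s \<in> S" for s
  proof -
    have "(\<lambda>x. g x * x * tent \<delta> s x) = tent \<delta> s"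
    proof
      fix x
      show "g x * x * tent \<delta> s x = tent \<delta> s x"
      proof (cases "x \<le> a")
      case True
      then have "\<delta> \<le> \<bar>x - s\<bar>" using below[OF s] S(3)[OF s] by simp
      then show ?thesis using tent_eq_0[OF \<delta>] by simp
    next
      case False
      then show ?thesis using a unfolding g_def by simp
    qed
    qed
    then have "cfc b (tent \<delta> s) = cfc b (\<lambda>x. g x * x * tent \<delta> s x)" by simp
    also have "\<dots> = cfc b g * (b * cfc b (tent \<delta> s))"
      using cfc_mult[OF sa cg continuous_on_id] cfc_id[OF sa]
        cfc_mult[OF sa _ continuous_on_tent, of "\<lambda>x. g x * x"] cg
      by (simp add: mult.assoc continuous_on_mult continuous_on_id)
    finally have "norm (cfc b (tent \<delta> s)) \<le> norm (cfc b g) * norm (b * cfc b (tent \<delta> s))"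
      by (metis norm_mult_ineq)
    also have "\<dots> \<le> (1 / a) * norm (b * cfc b (tent \<delta> s))"
      using norm_g by (intro mult_right_mono) auto
    finally show ?thesis using a by (simp add: field_simps)
  qed
  show ?thesis
  proof (intro that[of "(\<lambda>s. cfc b (tent \<delta> s)) ` S"] orthogonal_family_tents[OF sa S(1,2) \<delta> sep])
    fix c assume "c \<in> (\<lambda>s. cfc b (tent \<delta> s)) ` S"
    then show "b * c = c * b \<and> a * norm c \<le> norm (b * c)"
      using key cfc_commute_self[OF sa continuous_on_tent] by force
  qed
qed

lemma real_spectrum_positive_elem:
  assumes "positive_elem scaleC star b" "x \<in> real_spectrum b"
  shows "0 \<le> x"
  using assms unfolding positive_elem_def real_spectrum_def by force

lemma isolated_top_of_real_spectrum:
  assumes b: "positive_elem scaleC star b" "norm b = 1" and a: "0 \<le> a" "a < 1"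
    and fin: "finite {x \<in> real_spectrum b. a < x}"
  obtains m where "m < 1" "1 \<in> real_spectrum b" "\<And>x. x \<in> real_spectrum b \<Longrightarrow> x \<le> m \<or> x = 1"
proof -
  define G where "G = {x \<in> real_spectrum b. a < x}"
  define m where "m = Max (insert a (G - {1}))"
  have finm: "finite (insert a (G - {1}))" using fin unfolding G_def by simp
  have le1: "x \<le> 1" if "x \<in> real_spectrum b" for x
    using abs_le_norm_if_mem_real_spectrum[OF that] b(2) by simp
  have "m < 1"
    using Max_in[OF finm] le1 a unfolding m_def G_def by force
  moreover have gap: "x \<le> m \<or> x = 1" if "x \<in> real_spectrum b" for x
  proof (cases "a < x")
    case True
    then show ?thesis using that finm unfolding m_def G_def by auto
  next
    case False
    moreover have "a \<le> m" unfolding m_def using finm by simp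
    ultimately show ?thesis by simp
  qed
  moreover have "1 \<in> real_spectrum b"
  proof (rule ccontr)
    assume "1 \<notin> real_spectrum b"
    have "0 \<le> m" using Max_ge[OF finm, of a] a unfolding m_def by simp
    have "norm b \<le> m"
    proof (rule norm_self_adjoint_le)
      show "star b = b" using b(1) unfolding positive_elem_def by simp
      show "0 \<le> m" by fact
      fix l assume "l \<in> spectrum b"
      then obtain x where "x \<in> real_spectrum b" "l = complex_of_real x"
        using spectrum_self_adjoint_eq \<open>star b = b\<close> by blast
      then show "cmod l \<le> m"
        using gap real_spectrum_positive_elem[OF b(1)] \<open>1 \<notin> real_spectrum b\<close> by fastforce
    qed
    then show False using b(2) \<open>m < 1\<close> by simp
  qed
  ultimately show ?thesis using that by blast
qed

lemma spectral_projection_isolated_top: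
  assumes sa: "star b = b" and m: "m < 1" and one: "1 \<in> real_spectrum b"
    and gap: "\<And>x. x \<in> real_spectrum b \<Longrightarrow> x \<le> m \<or> x = 1"
  obtains p where "projection_elem star p" "p \<noteq> 0" "b * p = p" "p * b = p"
proof -
  define \<psi> where "\<psi> x = min 1 (max 0 ((x - m) / (1 - m)))" for x
  have c\<psi>: "continuous_on UNIV \<psi>" unfolding \<psi>_def divide_inverse by (intro continuous_intros)
  have \<psi>: "\<psi> x = (if x = 1 then 1 else 0)" if "x \<in> real_spectrum b" for x
    using gap[OF that] m by (auto simp: \<psi>_def divide_nonpos_pos)
  define p where "p = cfc b \<psi>"
  have "p * p = p"
    unfolding p_def cfc_mult[OF sa c\<psi> c\<psi>, symmetric]
    by (rule cfc_cong[OF sa _ c\<psi>]) (auto intro: continuous_on_mult c\<psi> simp: \<psi>)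
  then have "projection_elem star p"
    unfolding projection_elem_def p_def using cfc_self_adjoint[OF sa c\<psi>] by simp
  moreover have "p \<noteq> 0" unfolding p_def using one \<psi>[OF one] by (intro cfc_nonzero[OF sa c\<psi>]) auto
  moreover have "b * p = p"
  proof -
    have "b * p = cfc b (\<lambda>x. x * \<psi> x)"
      unfolding p_def using cfc_mult[OF sa continuous_on_id c\<psi>] cfc_id[OF sa] by simp
    also have "\<dots> = p"
      unfolding p_def by (rule cfc_cong[OF sa _ c\<psi>]) (auto intro: continuous_on_mult[OF continuous_on_id c\<psi>] simp: \<psi>)
    finally show ?thesis .
  qed
  moreover have "p * b = p" using \<open>b * p = p\<close> cfc_commute_self[OF sa c\<psi>] unfolding p_def by simp
  ultimately show ?thesis by (rule that)
qed

lemma orthogonal_family_almost_norming: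
  assumes corners: "\<And>e. projection_elem star e \<Longrightarrow> e \<noteq> 0 \<Longrightarrow> cinfinite_dim scaleC (corner e)"
    and b: "positive_elem scaleC star b" "norm b = 1" and \<epsilon>: "\<epsilon> > 0"
  obtains C where "orthogonal_family 1 C" "n \<le> card C"
    "\<And>c. c \<in> C \<Longrightarrow> b * c = c * b \<and> (1 - \<epsilon>) * norm c \<le> norm (b * c)"
proof -
  have sa: "star b = b" using b(1) unfolding positive_elem_def by blast
  define a where "a = max (1/2) (1 - \<epsilon>)"
  have a: "0 < a" "a < 1" "1 - \<epsilon> \<le> a" using \<epsilon> unfolding a_def by auto
  define G where "G = {x \<in> real_spectrum b. a < x}"
  show ?thesis
  proof (cases "finite G")
    case False
    then obtain S where S: "finite S" "card S = n" "S \<subseteq> G"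
      using infinite_arbitrarily_large by blast
    obtain C where "orthogonal_family 1 C" "card C = card S"
      and C: "\<And>c. c \<in> C \<Longrightarrow> b * c = c * b \<and> a * norm c \<le> norm (b * c)"
      using orthogonal_family_above[OF sa \<open>0 < a\<close> S(1)] S(3) unfolding G_def by blast
    show ?thesis
    proof (rule that)
      show "orthogonal_family 1 C" "n \<le> card C" by fact (simp add: S(2) \<open>card C = card S\<close>)
      fix c assume "c \<in> C"
      moreover have "(1 - \<epsilon>) * norm c \<le> a * norm c" using a by (simp add: mult_right_mono)
      ultimately show "b * c = c * b \<and> (1 - \<epsilon>) * norm c \<le> norm (b * c)" using C by fastforce
    qed
  next
    case True
    obtain m where "m < 1" "1 \<in> real_spectrum b" "\<And>x. x \<in> real_spectrum b \<Longrightarrow> x \<le> m \<or> x = 1"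
      using isolated_top_of_real_spectrum[OF b less_imp_le[OF \<open>0 < a\<close>] \<open>a < 1\<close>] True
      unfolding G_def by blast
    then obtain p where p: "projection_elem star p" "p \<noteq> 0" "b * p = p" "p * b = p"
      using spectral_projection_isolated_top[OF sa] by blast
    obtain C where C: "orthogonal_family p C" "n \<le> card C"
      using orthogonal_family_in_infinite_corner[OF p(1) corners[OF p(1,2)]] by blast
    have bc: "b * c = c \<and> c * b = c" if "c \<in> C" for c
    proof -
      have "p * c = c" "c * p = c" using C(1) that unfolding orthogonal_family_def by auto
      then show ?thesis using p(3,4) by (metis mult.assoc)
    qed
    have le: "(1 - \<epsilon>) * norm c \<le> norm c" for c
    proof -
      have "0 \<le> \<epsilon> * norm c" using \<epsilon> by simp
      then show ?thesis by (simp add: algebra_simps)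
    qed
    show ?thesis
    proof (rule that)
      show "orthogonal_family 1 C" using C(1) unfolding orthogonal_family_def by simp
      show "n \<le> card C" by (rule C(2))
      fix c assume "c \<in> C"
      then show "b * c = c * b \<and> (1 - \<epsilon>) * norm c \<le> norm (b * c)" using bc le by simp
    qed
  qed
qed

lemma normalized_orthogonal_sequence:
  assumes C: "orthogonal_family p C" "n \<le> card C"
    and props: "\<And>c. c \<in> C \<Longrightarrow> b * c = c * b \<and> (1 - \<epsilon>) * norm c \<le> norm (b * c)"
  shows "\<exists>bs :: nat \<Rightarrow> 'a.
           (\<forall>j\<in>{1..n}. positive_elem scaleC star (bs j) \<and> norm (bs j) = 1 \<and>
                        b * bs j = bs j * b \<and> norm (b * bs j) \<ge> 1 - \<epsilon>) \<and>
           (\<forall>i\<in>{1..n}. \<forall>j\<in>{1..n}. i \<noteq> j \<longrightarrow> bs i * bs j = 0)"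
proof -
  have fin: "finite C" and mem: "\<And>c. c \<in> C \<Longrightarrow> positive_elem scaleC star c \<and> c \<noteq> 0"
    and orth: "\<And>c d. c \<in> C \<Longrightarrow> d \<in> C \<Longrightarrow> c \<noteq> d \<Longrightarrow> c * d = 0"
    using C(1) unfolding orthogonal_family_def by auto
  obtain e where e: "bij_betw e {0..<card C} C" using ex_bij_betw_nat_finite[OF fin] by blast
  define bs where "bs j = scaleC (complex_of_real (1 / norm (e (j - 1)))) (e (j - 1))" for j
  have inC: "e (j - 1) \<in> C" if "j \<in> {1..n}" for j
    using e that C(2) unfolding bij_betw_def by auto
  have "positive_elem scaleC star (bs j) \<and> norm (bs j) = 1 \<and> b * bs j = bs j * b \<and> 1 - \<epsilon> \<le> norm (b * bs j)"
    if j: "j \<in> {1..n}" for j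
  proof -
    define c where "c = e (j - 1)"
    have c: "positive_elem scaleC star c" "norm c > 0" "b * c = c * b" "(1 - \<epsilon>) * norm c \<le> norm (b * c)"
      using mem[OF inC[OF j]] props[OF inC[OF j]] unfolding c_def by auto
    have bs: "bs j = scaleC (complex_of_real (1 / norm c)) c" unfolding bs_def c_def ..
    have "positive_elem scaleC star (bs j)" unfolding bs using c by (intro positive_elem_scaleR) auto
    moreover have "norm (bs j) = 1" unfolding bs using c(2) by (simp add: norm_scaleC norm_divide)
    moreover have "b * bs j = bs j * b"
      unfolding bs using c(3) by (simp add: scaleC_mult_left[symmetric] scaleC_mult_right[symmetric])
    moreover have "norm (b * bs j) = norm (b * c) / norm c"
      unfolding bs using c(2) by (simp add: scaleC_mult_right[symmetric] norm_scaleC norm_divide)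
    then have "1 - \<epsilon> \<le> norm (b * bs j)" using c(2,4) by (simp add: le_divide_eq)
    ultimately show ?thesis by blast
  qed
  moreover have "bs i * bs j = 0" if "i \<in> {1..n}" "j \<in> {1..n}" "i \<noteq> j" for i j
  proof -
    have "i - 1 \<in> {0..<card C}" "j - 1 \<in> {0..<card C}" "i - 1 \<noteq> j - 1" using that C(2) by auto
    then have "e (i - 1) \<noteq> e (j - 1)" using e unfolding bij_betw_def inj_on_def by blast
    then show ?thesis using orth inC that unfolding bs_def by (simp add: scaleC_mult_both)
  qed
  ultimately show ?thesis by blast
qed

end

theorem lemma1p4:
  fixes scaleC :: "complex \<Rightarrow> 'a::{real_normed_algebra_1, banach} \<Rightarrow> 'a"
    and star :: "'a \<Rightarrow> 'a"
    and b :: 'a and \<epsilon> :: real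
  assumes "unital_cstar_algebra scaleC star"
    and "\<And>e. projection_elem star e \<Longrightarrow> e \<noteq> 0 \<Longrightarrow> cinfinite_dim scaleC (corner e)"
    and "positive_elem scaleC star b" and "norm b = 1"
    and "\<epsilon> > 0"
  shows "\<forall>n::nat. n \<ge> 1 \<longrightarrow> (\<exists>bs :: nat \<Rightarrow> 'a.
           (\<forall>j\<in>{1..n}. positive_elem scaleC star (bs j) \<and> norm (bs j) = 1 \<and>
                        b * bs j = bs j * b \<and> norm (b * bs j) \<ge> 1 - \<epsilon>) \<and>
           (\<forall>i\<in>{1..n}. \<forall>j\<in>{1..n}. i \<noteq> j \<longrightarrow> bs i * bs j = 0))"
proof (intro allI impI)
  fix n :: nat
  interpret unital_cstar_algebra scaleC star by (rule assms(1))
  obtain C where "orthogonal_family 1 C" "n \<le> card C"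
    "\<And>c. c \<in> C \<Longrightarrow> b * c = c * b \<and> (1 - \<epsilon>) * norm c \<le> norm (b * c)"
    using orthogonal_family_almost_norming[OF assms(2-5)] by blast
  then show "\<exists>bs :: nat \<Rightarrow> 'a.
           (\<forall>j\<in>{1..n}. positive_elem scaleC star (bs j) \<and> norm (bs j) = 1 \<and>
                        b * bs j = bs j * b \<and> norm (b * bs j) \<ge> 1 - \<epsilon>) \<and>
           (\<forall>i\<in>{1..n}. \<forall>j\<in>{1..n}. i \<noteq> j \<longrightarrow> bs i * bs j = 0)"
    by (rule normalized_orthogonal_sequence)
qed

end
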